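(* Assume $\hat s(X)$ is continuously distributed, fix $\delta\in(0,1)$ and $\alpha\in(0,1)$, and suppose the global null holds: $X_{2n+1},\dots,X_{2n+m}$ are i.i.d. from $P_X$ and independent of $\mathcal{D}$. Write $\hat u_i^{\mathrm{(marg)}}=\hat u^{\mathrm{(marg)}}(X_{2n+i})$. (a) If $m = \gamma n$ for a constant $\gamma \in (0, \infty)$, then \[\mathbb{P}\left(\sum_{i=1}^{m} -2\log(h^{\mathrm{d}} \circ \hat{u}_i^{\mathrm{(marg)}})\ge \chi^2(2m; 1 - \alpha)\right) \le \exp\left\{-C(\gamma, \delta)\log^2 n\right\}\] for some constant $C(\gamma, \delta) > 0$ depending only on $\gamma$ and $\delta$. (b) If $m \rightarrow \infty$ and $m = o(n / \log^2 n)$, then \[\mathbb{P}\left(\sum_{i=1}^{m} -2\log(h^{\mathrm{d}} \circ \hat{u}_i^{\mathrm{(marg)}})\ge \chi^2(2m; 1 - \alpha)\right) = \alpha + o(1).\]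
   Context: Setting: $P_X$ is a distribution on $\mathbb{R}^d$. Data $X_1,\dots,X_{2n}$ are i.i.d. from $P_X$; $\mathcal{D}^{\mathrm{train}}=\{X_1,\dots,X_n\}$ is treated as fixed, $\mathcal{D}^{\mathrm{cal}}=\{X_{n+1},\dots,X_{2n}\}$, $\mathcal{D}=\mathcal{D}^{\mathrm{train}}\cup\mathcal{D}^{\mathrm{cal}}$. The score $\hat s$ is a fixed function determined by $\mathcal{D}^{\mathrm{train}}$; "$\hat s(X)$ continuously distributed" means $\hat s(X)$ is atomless for $X\sim P_X$ independent of the data. Marginal conformal p-value: $\hat{u}^{\mathrm{(marg)}}(x) = \frac{1 + |\{i \in \{n+1,\dots,2n\} : \hat{s}(X_i) \le \hat{s}(x)\}|}{n+1}$, taking values in $\{1/(n+1),\dots,1\}$. DKWM adjustment: $h^{\mathrm d}\left(\frac{i}{n+1}\right)=\min\left\{\frac{i}{n+1}+\sqrt{\frac{\log(2/\delta)}{2n}},1\right\}$ for $i=1,\dots,n+1$. $\chi^2(2m;1-\alpha)$ is the $(1-\alpha)$-quantile of $\chi^2_{2m}$. *)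

theory Defs
  imports "HOL-Probability.Probability" "HOL-Library.Landau_Symbols"
begin

definition chi2_density :: "nat \<Rightarrow> real \<Rightarrow> real" where
  "chi2_density k x = (if x > 0 then
      x powr (real k / 2 - 1) * exp (- x / 2) / (2 powr (real k / 2) * Gamma (real k / 2))
    else 0)"

definition chi2_cdf :: "nat \<Rightarrow> real \<Rightarrow> real" where
  "chi2_cdf k x = measure (density lborel (\<lambda>t. ennreal (chi2_density k t))) {..x}"

definition chi2_quantile :: "nat \<Rightarrow> real \<Rightarrow> real" where
  "chi2_quantile k p = Inf {x. p \<le> chi2_cdf k x}"

text \<open>Marginal conformal p-value: calibration points are cal 0, ..., cal (n-1)
  (i.e. X_{n+1},...,X_{2n}), s is the score.\<close>
definition u_marg :: "nat \<Rightarrow> ('a \<Rightarrow> real) \<Rightarrow> (nat \<Rightarrow> 'a) \<Rightarrow> 'a \<Rightarrow> real" where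
  "u_marg n s cal x = (1 + real (card {j. j < n \<and> s (cal j) \<le> s x})) / (real n + 1)"

text \<open>DKWM adjustment (only ever evaluated on the grid i/(n+1)).\<close>
definition h_dkwm :: "nat \<Rightarrow> real \<Rightarrow> real \<Rightarrow> real" where
  "h_dkwm n \<delta> u = min (u + sqrt (ln (2 / \<delta>) / (2 * real n))) 1"

text \<open>Fisher combination statistic. Coordinates 0..n-1 of \<omega> are the calibration
  points, coordinates n..n+m-1 the test points X_{2n+1},...,X_{2n+m}.\<close>
definition fisher_stat :: "nat \<Rightarrow> nat \<Rightarrow> real \<Rightarrow> ('a \<Rightarrow> real) \<Rightarrow> (nat \<Rightarrow> 'a) \<Rightarrow> real" where
  "fisher_stat n m \<delta> s \<omega> = (\<Sum>i<m. - 2 * ln (h_dkwm n \<delta> (u_marg n s \<omega> (\<omega> (n + i)))))"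

definition reject_prob :: "'a measure \<Rightarrow> ('a \<Rightarrow> real) \<Rightarrow> nat \<Rightarrow> nat \<Rightarrow> real \<Rightarrow> real \<Rightarrow> real" where
  "reject_prob P s n m \<delta> \<alpha> =
     measure (PiM {..<n + m} (\<lambda>_. P))
       {\<omega> \<in> space (PiM {..<n + m} (\<lambda>_. P)).
          chi2_quantile (2 * m) (1 - \<alpha>) \<le> fisher_stat n m \<delta> s \<omega>}"

definition valid_setting :: "'a::euclidean_space measure \<Rightarrow> ('a \<Rightarrow> real) \<Rightarrow> bool" where
  "valid_setting P s \<longleftrightarrow> prob_space P \<and> sets P = sets borel \<and> s \<in> borel_measurable P \<and>
     (\<forall>t. measure P (s -` {t} \<inter> space P) = 0)"

end

theory Submission
  imports Defs "HOL-Real_Asymp.Real_Asymp"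
begin

text \<open>Let U = F(s(X)) be the probability integral transform of a point. Under the
  null U is uniform, so -2 log U is chi-square with two degrees of freedom and the oracle Fisher
  statistic over the m test points is exactly chi-square with 2m degrees of freedom. A
  Bernstein bound for the calibration counts at the grid points k/n shows that, outside an event
  of probability 2(n+1) exp(-c^2/4), every conformal p-value is within c sqrt(U/n) + O(c^2/n) of U.
  With c of order log n this error is dominated by the DKWM shift eps of order n^(-1/2), so each
  adjusted term -2 log h(u) is controlled by an explicit function of U alone.
  (a) The shift lowers the mean of each term by about eps log(1/eps), of order log n / sqrt n;
  a Chernoff bound over m = gamma n terms against the chi-square quantile 2m - O(sqrt m) then
  gives exp(-C log^2 n).
  (b) The adjusted statistic differs from the oracle one by a sum of mean O(m log n / sqrt n),
  which is o(sqrt m), while the chi-square density with 2m degrees of freedom is O(1/sqrt m);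
  hence the rejection probability moves away from alpha by o(1).\<close>

lemma exp_le_quadratic:
  fixes x :: real
  assumes "x \<le> 1"
  shows "exp x \<le> 1 + x + x\<^sup>2"
proof (cases "x \<le> 0")
  case True
  have "1 + 0 + 0\<^sup>2 / 2 - exp 0 \<le> 1 + x + x\<^sup>2 / 2 - exp (x::real)"
  proof (rule DERIV_nonpos_imp_nonincreasing[of x 0])
    fix z :: real
    show "\<exists>d. ((\<lambda>y. 1 + y + y\<^sup>2 / 2 - exp y) has_real_derivative d) (at z) \<and> d \<le> 0"
      using exp_ge_add_one_self[of z] by (auto intro!: exI derivative_eq_intros)
  qed (use True in simp)
  then have "exp x \<le> 1 + x + x\<^sup>2 / 2" by simp
  then show ?thesis using zero_le_power2[of x] by linarith
qed (use exp_bound[of x] assms in simp)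

lemma ln_add_one_le_cubic:
  fixes x :: real
  assumes "0 \<le> x"
  shows "ln (1 + x) \<le> x - x\<^sup>2 / 2 + x ^ 3 / 3"
proof -
  have "0 - 0\<^sup>2 / 2 + 0 ^ 3 / 3 - ln (1 + 0) \<le> x - x\<^sup>2 / 2 + x ^ 3 / 3 - ln (1 + x)"
  proof (rule DERIV_nonneg_imp_nondecreasing[OF assms])
    fix z :: real
    assume z: "0 \<le> z"
    have "1 - z + z\<^sup>2 - 1 / (1 + z) = z ^ 3 / (1 + z)"
      using z by (simp add: field_simps power2_eq_square power3_eq_cube)
    then show "\<exists>d. ((\<lambda>x. x - x\<^sup>2 / 2 + x ^ 3 / 3 - ln (1 + x)) has_real_derivative d) (at z) \<and> 0 \<le> d"
      using z by (auto intro!: exI derivative_eq_intros simp: field_simps power2_eq_square)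
  qed
  then show ?thesis by simp
qed

lemma abs_ln_diff_le:
  fixes a b :: real
  assumes "0 < a" "0 < b"
  shows "\<bar>ln a - ln b\<bar> \<le> \<bar>a - b\<bar> / min a b"
  using ln_le_minus_one[of "a / b"] ln_le_minus_one[of "b / a"] assms
  by (cases "a \<le> b") (auto simp: ln_div field_simps min_def abs_if)

section \<open>Chi-square laws with an even number of degrees of freedom\<close>

lemma Stirling_lower_step:
  fixes k :: nat
  assumes "2 \<le> k"
  shows "real (k + 1) ^ k * exp (-1) * sqrt (real k + 2) \<le> real k ^ k * sqrt (real k + 1)"
proof -
  define x where "x = real k"
  have x2: "2 \<le> x" using assms by (simp add: x_def)
  have "ln (x + 1) = ln x + ln (1 + 1 / x)"
    using ln_mult[of x "1 + 1 / x"] x2 by (simp add: distrib_left add_pos_pos add_nonneg_eq_0_iff)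
  then have ln1: "ln (x + 1) \<le> ln x + (1 / x - (1 / x)\<^sup>2 / 2 + (1 / x) ^ 3 / 3)"
    using ln_add_one_le_cubic[of "1 / x"] x2 by simp
  have "ln (x + 2) = ln (x + 1) + ln (1 + 1 / (x + 1))"
    using ln_mult[of "x + 1" "1 + 1 / (x + 1)"] x2 by (simp add: distrib_left add_pos_pos add_nonneg_eq_0_iff add.commute)
  then have ln2: "ln (x + 2) \<le> ln (x + 1) + 1 / (x + 1)"
    using ln_add_one_self_le_self[of "1 / (x + 1)"] x2 by simp
  have "1 / (3 * x\<^sup>2) \<le> 1 / (2 * x * (x + 1))"
    using x2 mult_right_mono[of 2 x x] by (intro divide_left_mono) (auto simp: power2_eq_square)
  moreover have "x * (1 / x - (1 / x)\<^sup>2 / 2 + (1 / x) ^ 3 / 3) - 1 + 1 / (2 * (x + 1))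
      = 1 / (3 * x\<^sup>2) - 1 / (2 * x * (x + 1))"
    using x2 by (simp add: divide_simps power2_eq_square power3_eq_cube) (simp add: algebra_simps)
  ultimately have slack: "x * (1 / x - (1 / x)\<^sup>2 / 2 + (1 / x) ^ 3 / 3) - 1 + 1 / (2 * (x + 1)) \<le> 0"
    by linarith
  have "ln ((x + 1) ^ k * exp (-1) * sqrt (x + 2)) = k * ln (x + 1) - 1 + ln (x + 2) / 2"
    using x2 by (simp add: ln_mult ln_realpow ln_sqrt)
  also have "\<dots> \<le> k * (ln x + (1 / x - (1 / x)\<^sup>2 / 2 + (1 / x) ^ 3 / 3)) - 1 + (ln (x + 1) + 1 / (x + 1)) / 2"
    using ln1 ln2 by (intro add_mono diff_mono mult_left_mono divide_right_mono) auto
  also have "\<dots> = k * ln x + ln (x + 1) / 2 + (x * (1 / x - (1 / x)\<^sup>2 / 2 + (1 / x) ^ 3 / 3) - 1 + 1 / (2 * (x + 1)))"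
    by (simp add: x_def algebra_simps add_divide_distrib)
  also have "\<dots> \<le> ln (x ^ k * sqrt (x + 1))"
    using slack x2 by (simp add: ln_mult ln_realpow ln_sqrt)
  finally show ?thesis
    using x2 by (subst (asm) ln_le_cancel_iff) (auto simp: x_def add.commute)
qed

lemma fact_ge_Stirling_lower:
  fixes k :: nat
  shows "real k ^ k * exp (- real k) * sqrt (real k + 1) \<le> fact k"
proof -
  have e2: "2 \<le> exp (1::real)" using exp_ge_add_one_self[of 1] by simp
  have small: "real k ^ k * exp (- real k) * sqrt (real k + 1) \<le> fact k" if "k \<le> 2" for k :: nat
  proof -
    have "sqrt (2::real) \<le> 2" "sqrt (3::real) \<le> 2"
      using real_sqrt_le_iff[of 2 4] real_sqrt_le_iff[of 3 4] by auto
    moreover have "4 \<le> exp (2::real)"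
      using mult_mono[OF e2 e2] by (simp flip: exp_add)
    ultimately have "sqrt 2 \<le> exp (1::real)" "4 * sqrt 3 \<le> 2 * exp (2::real)"
      using e2 by linarith+
    then show ?thesis
      using that by (auto simp: le_Suc_eq numeral_2_eq_2 exp_minus field_simps)
  qed
  show ?thesis
  proof (cases "k \<le> 2")
    case True
    then show ?thesis by (rule small)
  next
    case False
    then have "2 \<le> k" by simp
    then show ?thesis
    proof (induction k rule: dec_induct)
      case (step k)
      have "real (Suc k) ^ Suc k * exp (- real (Suc k)) * sqrt (real (Suc k) + 1)
          = real (k + 1) * (real (k + 1) ^ k * exp (-1) * sqrt (real k + 2)) * exp (- real k)"
        by (simp add: exp_diff exp_minus field_simps)
      also have "\<dots> \<le> real (k + 1) * (real k ^ k * exp (- real k) * sqrt (real k + 1))"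
        using Stirling_lower_step[OF step.hyps(1)] by (simp add: mult_left_mono mult_right_mono mult_ac)
      also have "\<dots> \<le> fact (Suc k)"
        using step.IH by (simp add: mult_left_mono)
      finally show ?case .
    qed (rule small, simp)
  qed
qed

lemma pow_mult_exp_neg_le:
  fixes y :: real
  assumes "0 \<le> y"
  shows "y ^ k * exp (- y) \<le> real k ^ k * exp (- real k)"
proof (cases "k = 0 \<or> y = 0")
  case False
  then have y: "0 < y" and k: "0 < real k" using assms by auto
  have "k * ln (y / k) \<le> k * (y / k - 1)"
    using ln_le_minus_one[of "y / k"] y k by (intro mult_left_mono) auto
  then have "k * ln y - y \<le> k * ln k - k"
    using y k by (simp add: ln_div right_diff_distrib)
  then have "exp (k * ln y - y) \<le> exp (k * ln k - k)" by simp
  then show ?thesis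
    using y k by (simp add: exp_diff exp_minus ln_realpow[symmetric] field_simps)
qed (use assms in \<open>auto simp: power_0_left\<close>)

lemma erlang_density_le:
  assumes l: "0 < l"
  shows "erlang_density k l x \<le> l / sqrt (real k + 1)"
proof (cases "x < 0")
  case False
  have "erlang_density k l x = l * ((l * x) ^ k * exp (- (l * x))) / fact k"
    using False by (simp add: erlang_density_def power_mult_distrib mult_ac)
  also have "\<dots> \<le> l * (real k ^ k * exp (- real k)) / fact k"
    using l False by (intro divide_right_mono mult_left_mono pow_mult_exp_neg_le) auto
  also have "\<dots> \<le> l / sqrt (real k + 1)"
    using fact_ge_Stirling_lower[of k] l by (simp add: field_simps mult_left_mono)
  finally show ?thesis .
qed (use l in \<open>simp add: erlang_density_def\<close>)

definition erlang_measure :: "nat \<Rightarrow> real \<Rightarrow> real measure" where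
  "erlang_measure k l = density lborel (erlang_density k l)"

definition chi2_measure :: "nat \<Rightarrow> real measure" where
  "chi2_measure k = density lborel (\<lambda>x. ennreal (chi2_density k x))"

lemma borel_measurable_chi2_density [measurable]: "chi2_density k \<in> borel_measurable borel"
  unfolding chi2_density_def[abs_def] by measurable

lemma sets_erlang_measure [simp, measurable_cong]: "sets (erlang_measure k l) = sets borel"
  by (simp add: erlang_measure_def)

lemma real_distribution_erlang_measure:
  assumes "0 < l"
  shows "real_distribution (erlang_measure k l)"
  using prob_space_erlang_density[OF assms]
  by (simp add: real_distribution_def real_distribution_axioms_def erlang_measure_def)

lemma emeasure_erlang_measure_le:
  assumes "0 < l" "A \<in> sets borel"
  shows "emeasure (erlang_measure k l) A \<le> ennreal (l / sqrt (real k + 1)) * emeasure lborel A"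
proof -
  have "emeasure (erlang_measure k l) A = (\<integral>\<^sup>+x. ennreal (erlang_density k l x) * indicator A x \<partial>lborel)"
    using assms by (simp add: erlang_measure_def emeasure_density)
  also have "\<dots> \<le> (\<integral>\<^sup>+x. ennreal (l / sqrt (real k + 1)) * indicator A x \<partial>lborel)"
    using assms by (intro nn_integral_mono mult_right_mono) (auto intro: erlang_density_le)
  finally show ?thesis
    using assms by (simp add: nn_integral_cmult_indicator)
qed

lemma measure_erlang_measure_Ioc_le:
  assumes "0 < l" "a \<le> b"
  shows "measure (erlang_measure k l) {a<..b} \<le> l * (b - a) / sqrt (real k + 1)"
proof -
  interpret real_distribution "erlang_measure k l"
    by (rule real_distribution_erlang_measure[OF assms(1)])
  have "emeasure (erlang_measure k l) {a<..b} \<le> ennreal (l * (b - a) / sqrt (real k + 1))"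
    using emeasure_erlang_measure_le[of l "{a<..b}" k] assms by (simp add: ennreal_mult[symmetric])
  then show ?thesis
    using assms by (simp add: emeasure_eq_measure)
qed

lemma isCont_cdf_erlang_measure:
  assumes "0 < l"
  shows "isCont (cdf (erlang_measure k l)) x"
proof -
  interpret real_distribution "erlang_measure k l"
    by (rule real_distribution_erlang_measure[OF assms])
  have "emeasure (erlang_measure k l) {x} = 0"
    using emeasure_erlang_measure_le[OF assms, of "{x}" k] by simp
  then show ?thesis
    by (simp add: isCont_cdf measure_def)
qed

lemma chi2_measure_even:
  assumes "0 < m"
  shows "chi2_measure (2 * m) = erlang_measure (m - 1) (1 / 2)"
  unfolding chi2_measure_def erlang_measure_def
proof (intro density_cong)
  obtain k where m: "m = Suc k" using assms by (cases m) auto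
  have "chi2_density (2 * m) x = erlang_density (m - 1) (1 / 2) x" if "x \<noteq> 0" for x
  proof -
    have half: "real (2 * Suc k) / 2 = real (Suc k)" "real (2 * Suc k) / 2 - 1 = real k"
      by (simp_all add: field_simps)
    have "Gamma (real (Suc k)) = fact k"
      using Gamma_fact[of k] by (simp add: add.commute)
    then show ?thesis
      using that unfolding m chi2_density_def erlang_density_def half
      by (auto simp: powr_add powr_realpow power_one_over field_simps)
  qed
  then show "AE x in lborel. ennreal (chi2_density (2 * m) x) = ennreal (erlang_density (m - 1) (1 / 2) x)"
    by (intro eventually_mono[OF AE_lborel_singleton[of 0]]) auto
qed auto

lemma chi2_cdf_eq_cdf: "chi2_cdf k x = cdf (chi2_measure k) x"
  by (simp add: chi2_cdf_def chi2_measure_def cdf_def)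

lemma real_distribution_chi2_measure_even:
  "0 < m \<Longrightarrow> real_distribution (chi2_measure (2 * m))"
  using real_distribution_erlang_measure[of "1 / 2" "m - 1"] chi2_measure_even[of m] by simp

lemma isCont_cdf_chi2_measure_even:
  "0 < m \<Longrightarrow> isCont (cdf (chi2_measure (2 * m))) x"
  using isCont_cdf_erlang_measure[where l = "1 / 2" and k = "m - 1"] chi2_measure_even[of m] by simp

lemma measure_chi2_measure_Ioc_le:
  assumes "0 < m" "a \<le> b"
  shows "measure (chi2_measure (2 * m)) {a<..b} \<le> (b - a) / (2 * sqrt (real m))"
  using measure_erlang_measure_Ioc_le[where l = "1 / 2" and k = "m - 1", of a b] chi2_measure_even[of m] assms
  by (simp add: of_nat_diff)

lemma (in real_distribution) cdf_sublevel_sets [measurable]: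
  "{x. cdf M x \<le> v} \<in> events" "{x. cdf M x < v} \<in> events"
proof -
  have "cdf M \<in> borel_measurable borel"
    by (rule borel_measurable_mono) (simp add: mono_def cdf_nondecreasing)
  then show "{x. cdf M x \<le> v} \<in> events" "{x. cdf M x < v} \<in> events"
    using measurable_sets[of "cdf M" borel borel "{..v}"] measurable_sets[of "cdf M" borel borel "{..<v}"]
    by (auto simp: vimage_def)
qed

lemma (in real_distribution) cdf_attains:
  assumes cont: "\<And>x. isCont (cdf M) x" and p: "0 < p" "p < 1"
  shows "\<exists>t. cdf M t = p"
proof -
  obtain a where a: "cdf M a < p"
    using order_tendstoD(2)[OF cdf_lim_at_bot p(1)] by (auto dest: eventually_happens)
  obtain b where b: "p < cdf M b"
    using order_tendstoD(1)[OF cdf_lim_at_top_prob p(2)] by (auto dest: eventually_happens)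
  have "a \<le> b"
    using cdf_nondecreasing[of b a] a b by (cases "a \<le> b") auto
  then show ?thesis
    using IVT'[of "cdf M" a p b] a b cont by (auto intro: continuous_at_imp_continuous_on)
qed

lemma (in real_distribution) cdf_quantile:
  assumes cont: "\<And>x. isCont (cdf M) x" and p: "0 < p" "p < 1"
  shows "cdf M (Inf {x. p \<le> cdf M x}) = p"
proof -
  define S where "S = {x. p \<le> cdf M x}"
  obtain t where t: "cdf M t = p"
    using cdf_attains[OF cont p] by blast
  obtain a where a: "\<forall>x\<le>a. cdf M x < p"
    using order_tendstoD(2)[OF cdf_lim_at_bot p(1)] by (auto simp: eventually_at_bot_linorder)
  have bdd: "bdd_below S"
  proof (rule bdd_belowI)
    fix x assume "x \<in> S"
    then show "a \<le> x" using a[rule_format, of x] by (cases "x \<le> a") (auto simp: S_def)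
  qed
  have "closed S"
    unfolding S_def by (intro closed_Collect_le continuous_intros continuous_at_imp_continuous_on ballI cont)
  then have "Inf S \<in> S"
    using t bdd by (intro closed_contains_Inf) (auto simp: S_def)
  moreover have "Inf S \<le> t"
    using t bdd by (intro cInf_lower) (auto simp: S_def)
  ultimately show ?thesis
    using cdf_nondecreasing[of "Inf S" t] t by (simp add: S_def)
qed

lemma (in real_distribution) prob_cdf_le:
  assumes cont: "\<And>x. isCont (cdf M) x" and v: "0 \<le> v" "v \<le> 1"
  shows "prob {x. cdf M x \<le> v} = v"
proof (cases "v = 1")
  case True
  then show ?thesis
    using cdf_bounded_prob prob_space by simp
next
  case False
  define S where "S = {x. cdf M x \<le> v}"
  show ?thesis
  proof (cases "S = {}")
    case True
    have "v = 0"
    proof (rule ccontr)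
      assume "v \<noteq> 0"
      then obtain x where "cdf M x < v"
        using order_tendstoD(2)[OF cdf_lim_at_bot, of v] v by (auto dest: eventually_happens)
      then show False using True by (auto simp: S_def dest: less_imp_le)
    qed
    with True show ?thesis by (simp add: S_def)
  next
    case False
    obtain b where b: "\<forall>x\<ge>b. v < cdf M x"
      using order_tendstoD(1)[OF cdf_lim_at_top_prob, of v] v \<open>v \<noteq> 1\<close>
      by (auto simp: eventually_at_top_linorder)
    have bdd: "bdd_above S"
    proof (rule bdd_aboveI)
      fix x assume "x \<in> S"
      then show "x \<le> b" using b[rule_format, of x] by (cases "b \<le> x") (auto simp: S_def)
    qed
    have "closed S"
      unfolding S_def by (intro closed_Collect_le continuous_intros continuous_at_imp_continuous_on ballI cont)
    then have sup: "Sup S \<in> S"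
      using False bdd by (intro closed_contains_Sup)
    have "S = {..Sup S}"
      using sup bdd cdf_nondecreasing by (auto simp: S_def intro: cSup_upper order_trans)
    then have "prob S = cdf M (Sup S)"
      by (simp add: cdf_def)
    moreover have "v \<le> cdf M (Sup S)"
    proof (cases "v = 0")
      case False
      then obtain t where t: "cdf M t = v"
        using cdf_attains[OF cont] v \<open>v \<noteq> 1\<close> by force
      then have "t \<le> Sup S"
        using bdd by (intro cSup_upper) (auto simp: S_def)
      then show ?thesis
        using t cdf_nondecreasing by blast
    qed (simp add: cdf_nonneg)
    ultimately show ?thesis
      using sup by (simp add: S_def)
  qed
qed

lemma (in real_distribution) prob_cdf_less:
  assumes cont: "\<And>x. isCont (cdf M) x" and v: "0 \<le> v" "v \<le> 1"
  shows "prob {x. cdf M x < v} = v"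
proof (rule antisym)
  have "prob {x. cdf M x < v} \<le> prob {x. cdf M x \<le> v}"
    using cdf_sublevel_sets by (intro finite_measure_mono) auto
  then show "prob {x. cdf M x < v} \<le> v"
    using prob_cdf_le[OF cont v] by simp
  show "v \<le> prob {x. cdf M x < v}"
  proof (rule field_le_epsilon)
    fix e :: real
    assume e: "0 < e"
    show "v \<le> prob {x. cdf M x < v} + e"
    proof (cases "v \<le> e")
      case False
      then have "v - e = prob {x. cdf M x \<le> v - e}"
        using prob_cdf_le[OF cont, of "v - e"] v e by simp
      also have "\<dots> \<le> prob {x. cdf M x < v}"
        using e cdf_sublevel_sets by (intro finite_measure_mono) auto
      finally show ?thesis by simp
    qed (use measure_nonneg[of M "{x. cdf M x < v}"] in linarith)
  qed
qed

lemma chi2_cdf_chi2_quantile: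
  assumes "0 < m" "0 < p" "p < 1"
  shows "chi2_cdf (2 * m) (chi2_quantile (2 * m) p) = p"
  using real_distribution.cdf_quantile[OF real_distribution_chi2_measure_even isCont_cdf_chi2_measure_even]
    assms
  by (simp add: chi2_quantile_def chi2_cdf_eq_cdf[abs_def])

lemma chi2_cdf_lower_tail:
  assumes m: "0 < m" and t: "0 < t"
  shows "chi2_cdf (2 * m) (2 * real m - t) \<le> 4 * real m / t\<^sup>2"
proof -
  define k where "k = m - 1"
  have mk: "m = Suc k" using m by (simp add: k_def)
  have erlang: "chi2_measure (2 * m) = erlang_measure k (1 / 2)"
    using chi2_measure_even[OF m] by (simp add: k_def)
  interpret prob_space "erlang_measure k (1 / 2)"
    using real_distribution_erlang_measure by (simp add: real_distribution_def)
  have D: "distributed (erlang_measure k (1 / 2)) lborel (\<lambda>x. x) (erlang_density k (1 / 2))"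
    by (simp add: distributed_def erlang_measure_def distr_id2)
  have "chi2_cdf (2 * m) (2 * real m - t) = prob {..2 * real m - t}"
    by (simp only: chi2_cdf_eq_cdf cdf_def erlang)
  also have "\<dots> \<le> prob {x \<in> space (erlang_measure k (1 / 2)). t \<le> \<bar>x - expectation (\<lambda>x. x)\<bar>}"
    using erlang_ith_moment[OF _ D, of 1] mk by (intro finite_measure_mono) (auto simp: erlang_measure_def)
  also have "\<dots> \<le> variance (\<lambda>x. x) / t\<^sup>2"
    using erlang_ith_moment_integrable[OF _ D, of 2] t by (intro Chebyshev_inequality) auto
  also have "\<dots> = 4 * real m / t\<^sup>2"
    using erlang_distributed_variance[OF _ D] mk by (simp add: power2_eq_square)
  finally show ?thesis .
qed

lemma chi2_quantile_lower_bound: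
  assumes m: "0 < m" and \<alpha>: "0 < \<alpha>" "\<alpha> < 1"
  shows "2 * real m - 3 / sqrt (1 - \<alpha>) * sqrt (real m) \<le> chi2_quantile (2 * m) (1 - \<alpha>)"
proof (rule ccontr)
  interpret real_distribution "chi2_measure (2 * m)"
    by (rule real_distribution_chi2_measure_even[OF m])
  define t where "t = 3 / sqrt (1 - \<alpha>) * sqrt (real m)"
  have t: "0 < t" using m \<alpha> by (simp add: t_def)
  assume "\<not> 2 * real m - 3 / sqrt (1 - \<alpha>) * sqrt (real m) \<le> chi2_quantile (2 * m) (1 - \<alpha>)"
  then have "chi2_quantile (2 * m) (1 - \<alpha>) \<le> 2 * real m - t"
    by (simp add: t_def)
  then have "cdf (chi2_measure (2 * m)) (chi2_quantile (2 * m) (1 - \<alpha>))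
      \<le> cdf (chi2_measure (2 * m)) (2 * real m - t)"
    by (rule cdf_nondecreasing)
  then have "1 - \<alpha> \<le> chi2_cdf (2 * m) (2 * real m - t)"
    using chi2_cdf_chi2_quantile[OF m, of "1 - \<alpha>"] \<alpha> by (simp add: chi2_cdf_eq_cdf)
  also have "\<dots> \<le> 4 * real m / t\<^sup>2"
    by (rule chi2_cdf_lower_tail[OF m t])
  also have "\<dots> = 4 * (1 - \<alpha>) / 9"
    using m \<alpha> by (simp add: t_def power_mult_distrib power_divide)
  finally show False using \<alpha> by simp
qed

lemma chi2_measure_near_quantile:
  assumes m: "0 < m" and \<alpha>: "0 < \<alpha>" "\<alpha> < 1" and r: "0 < r"
  defines "q \<equiv> chi2_quantile (2 * m) (1 - \<alpha>)"
  shows "measure (chi2_measure (2 * m)) {q - r<..} \<le> \<alpha> + r / (2 * sqrt (real m))"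
    and "\<alpha> - r / (2 * sqrt (real m)) \<le> measure (chi2_measure (2 * m)) {q + r..}"
proof -
  interpret real_distribution "chi2_measure (2 * m)"
    by (rule real_distribution_chi2_measure_even[OF m])
  have "prob {..q} = 1 - \<alpha>"
    using chi2_cdf_chi2_quantile[OF m, of "1 - \<alpha>"] \<alpha> by (simp add: q_def chi2_cdf_eq_cdf cdf_def)
  then have above: "prob {q<..} = \<alpha>"
    using prob_compl[of "{..q}"] by (simp add: Compl_eq_Diff_UNIV[symmetric] Compl_atMost)
  have "prob {q - r<..} = prob {q - r<..q} + prob {q<..}"
    using r by (subst finite_measure_Union[symmetric]) (auto intro!: arg_cong[where f = prob])
  then show "prob {q - r<..} \<le> \<alpha> + r / (2 * sqrt (real m))"
    using measure_chi2_measure_Ioc_le[OF m, of "q - r" q] r above by simp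
  have "prob {q<..} \<le> prob ({q<..q + r} \<union> {q + r..})"
    by (intro finite_measure_mono) auto
  also have "\<dots> \<le> prob {q<..q + r} + prob {q + r..}"
    by (intro measure_Un_le) auto
  finally show "\<alpha> - r / (2 * sqrt (real m)) \<le> prob {q + r..}"
    using measure_chi2_measure_Ioc_le[OF m, of q "q + r"] r above by simp
qed

section \<open>Independent samples\<close>

definition iid_sample :: "'a measure \<Rightarrow> nat \<Rightarrow> (nat \<Rightarrow> 'a) measure" where
  "iid_sample M N = PiM {..<N} (\<lambda>_. M)"

lemma sets_iid_sample [measurable_cong]: "sets (iid_sample M N) = sets (PiM {..<N} (\<lambda>_. M))"
  by (simp add: iid_sample_def)

lemma measurable_iid_sample_component:
  "i < N \<Longrightarrow> (\<lambda>\<omega>. \<omega> i) \<in> measurable (iid_sample M N) M"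
  unfolding iid_sample_def by measurable

lemma measurable_iid_sample_compose:
  "i < N \<Longrightarrow> f \<in> measurable M K \<Longrightarrow> (\<lambda>\<omega>. f (\<omega> i)) \<in> measurable (iid_sample M N) K"
  using measurable_compose[OF measurable_iid_sample_component] by blast

lemma borel_measurable_iid_sample_sum:
  fixes Y :: "'a \<Rightarrow> 'b::{second_countable_topology, topological_comm_monoid_add}"
  assumes "J \<subseteq> {..<N}" "Y \<in> borel_measurable M"
  shows "(\<lambda>\<omega>. \<Sum>j\<in>J. Y (\<omega> j)) \<in> borel_measurable (iid_sample M N)"
  using assms by (intro borel_measurable_sum measurable_iid_sample_compose) auto

lemma space_iid_sample_component: "\<omega> \<in> space (iid_sample M N) \<Longrightarrow> i < N \<Longrightarrow> \<omega> i \<in> space M"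
  by (auto simp: iid_sample_def space_PiM)

context prob_space
begin

lemma prob_space_iid_sample: "prob_space (iid_sample M N)"
  unfolding iid_sample_def by (rule prob_space_PiM) (rule prob_space_axioms)

lemma distr_iid_sample_component: "i < N \<Longrightarrow> distr (iid_sample M N) M (\<lambda>\<omega>. \<omega> i) = M"
  unfolding iid_sample_def by (rule distr_PiM_component) (auto intro: prob_space_axioms)

lemma nn_integral_iid_sample_component:
  assumes "i < N" and [measurable]: "f \<in> borel_measurable M"
  shows "(\<integral>\<^sup>+\<omega>. f (\<omega> i) \<partial>iid_sample M N) = (\<integral>\<^sup>+x. f x \<partial>M)"
proof -
  have "(\<integral>\<^sup>+\<omega>. f (\<omega> i) \<partial>iid_sample M N) = (\<integral>\<^sup>+x. f x \<partial>distr (iid_sample M N) M (\<lambda>\<omega>. \<omega> i))"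
    by (rule nn_integral_distr[OF measurable_iid_sample_component[OF assms(1)], symmetric]) simp
  then show ?thesis
    using distr_iid_sample_component[OF assms(1)] by simp
qed

lemma measure_iid_sample_component:
  assumes "i < N" "A \<in> events"
  shows "measure (iid_sample M N) {\<omega> \<in> space (iid_sample M N). \<omega> i \<in> A} = prob A"
  using measure_distr[OF measurable_iid_sample_component[OF assms(1)] assms(2)]
    distr_iid_sample_component[OF assms(1)] by (simp add: vimage_def Int_def conj_commute)

lemma nn_integral_iid_sample_prod:
  assumes J: "J \<subseteq> {..<N}" and f: "\<And>j. j \<in> J \<Longrightarrow> f j \<in> borel_measurable M"
  shows "(\<integral>\<^sup>+\<omega>. (\<Prod>j\<in>J. f j (\<omega> j)) \<partial>iid_sample M N) = (\<Prod>j\<in>J. \<integral>\<^sup>+x. f j x \<partial>M)"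
proof -
  interpret product_sigma_finite "\<lambda>_. M"
    by (intro product_sigma_finite.intro) (simp add: sigma_finite_measure_axioms)
  define g where "g j = (if j \<in> J then f j else (\<lambda>_. 1))" for j
  have g: "g j \<in> borel_measurable M" for j
    using f by (cases "j \<in> J") (simp_all add: g_def)
  have fin: "finite J" using J finite_subset by blast
  have "(\<Prod>j<N. g j (\<omega> j)) = (\<Prod>j\<in>J. f j (\<omega> j))" for \<omega>
  proof -
    have "(\<Prod>j<N. g j (\<omega> j)) = (\<Prod>j\<in>J. g j (\<omega> j))"
      using J by (intro prod.mono_neutral_right) (auto simp: g_def)
    also have "\<dots> = (\<Prod>j\<in>J. f j (\<omega> j))"
      by (intro prod.cong) (auto simp: g_def)
    finally show ?thesis .
  qed
  then have "(\<integral>\<^sup>+\<omega>. (\<Prod>j\<in>J. f j (\<omega> j)) \<partial>iid_sample M N) = (\<integral>\<^sup>+\<omega>. (\<Prod>j<N. g j (\<omega> j)) \<partial>iid_sample M N)"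
    by simp
  also have "\<dots> = (\<Prod>j<N. \<integral>\<^sup>+x. g j x \<partial>M)"
    unfolding iid_sample_def by (rule product_nn_integral_prod) (simp, rule g)
  also have "\<dots> = (\<Prod>j\<in>J. \<integral>\<^sup>+x. g j x \<partial>M)"
    using J by (intro prod.mono_neutral_right) (auto simp: g_def emeasure_space_1)
  also have "\<dots> = (\<Prod>j\<in>J. \<integral>\<^sup>+x. f j x \<partial>M)"
    by (intro prod.cong) (auto simp: g_def)
  finally show ?thesis .
qed

lemma indep_vars_iid_sample:
  assumes "0 < N"
  shows "prob_space.indep_vars (iid_sample M N) (\<lambda>_. M) (\<lambda>i \<omega>. \<omega> i) {..<N}"
proof -
  interpret S: prob_space "iid_sample M N" by (rule prob_space_iid_sample)
  have "distr (iid_sample M N) (\<Pi>\<^sub>M i\<in>{..<N}. M) (\<lambda>x. \<lambda>i\<in>{..<N}. x i) = iid_sample M N"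
    by (subst distr_cong[of _ _ _ _ _ "\<lambda>x. x"]) (auto simp: iid_sample_def space_PiM)
  also have "\<dots> = (\<Pi>\<^sub>M i\<in>{..<N}. distr (iid_sample M N) M (\<lambda>\<omega>. \<omega> i))"
    unfolding iid_sample_def[of M N] by (intro PiM_cong) (auto simp: distr_iid_sample_component[unfolded iid_sample_def])
  finally show ?thesis
    using assms by (subst S.indep_vars_iff_distr_eq_PiM') auto
qed

lemma distributed_iid_sample_component:
  assumes i: "i < N" and D: "distributed M lborel g f"
  shows "distributed (iid_sample M N) lborel (\<lambda>\<omega>. g (\<omega> i)) f"
proof -
  have g: "g \<in> measurable M lborel" using D by (simp add: distributed_def)
  have "distr (iid_sample M N) lborel (\<lambda>\<omega>. g (\<omega> i)) = distr (distr (iid_sample M N) M (\<lambda>\<omega>. \<omega> i)) lborel g"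
    using distr_distr[OF g measurable_iid_sample_component[OF i]] by (simp add: comp_def)
  also have "\<dots> = density lborel f"
    using D distr_iid_sample_component[OF i] by (simp add: distributed_def)
  finally show ?thesis
    using D measurable_iid_sample_compose[OF i g] unfolding distributed_def by simp
qed

lemma iid_sample_sum_Chernoff:
  assumes J: "J \<subseteq> {..<N}" and [measurable]: "Y \<in> borel_measurable M" and l: "0 \<le> l"
    and mgf: "(\<integral>\<^sup>+x. ennreal (exp (l * Y x)) \<partial>M) \<le> ennreal c" and c: "0 \<le> c"
  shows "measure (iid_sample M N) {\<omega> \<in> space (iid_sample M N). t \<le> (\<Sum>j\<in>J. Y (\<omega> j))}
    \<le> exp (- l * t) * c ^ card J"
proof -
  interpret S: prob_space "iid_sample M N" by (rule prob_space_iid_sample)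
  have fin: "finite J" using J finite_subset by blast
  have [measurable]: "(\<lambda>\<omega>. \<Sum>j\<in>J. Y (\<omega> j)) \<in> borel_measurable (iid_sample M N)"
    using J by (intro borel_measurable_iid_sample_sum) auto
  let ?A = "{\<omega> \<in> space (iid_sample M N). t \<le> (\<Sum>j\<in>J. Y (\<omega> j))}"
  have "emeasure (iid_sample M N) ?A
      \<le> (\<integral>\<^sup>+\<omega>. ennreal (exp (- l * t)) * (\<Prod>j\<in>J. ennreal (exp (l * Y (\<omega> j)))) \<partial>iid_sample M N)"
  proof (subst nn_integral_indicator[symmetric], simp, intro nn_integral_mono)
    fix \<omega>
    have "(\<Prod>j\<in>J. exp (l * Y (\<omega> j))) = exp (\<Sum>j\<in>J. l * Y (\<omega> j))"
      by (rule exp_sum[OF fin, symmetric])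
    then have "ennreal (exp (- l * t)) * (\<Prod>j\<in>J. ennreal (exp (l * Y (\<omega> j))))
        = ennreal (exp (l * ((\<Sum>j\<in>J. Y (\<omega> j)) - t)))"
      by (simp add: prod_ennreal ennreal_mult[symmetric] prod_nonneg mult_exp_exp sum_distrib_left
          right_diff_distrib)
    then show "indicator ?A \<omega> \<le> ennreal (exp (- l * t)) * (\<Prod>j\<in>J. ennreal (exp (l * Y (\<omega> j))))"
      using l by (auto simp: indicator_def)
  qed
  also have "\<dots> = ennreal (exp (- l * t)) * (\<Prod>j\<in>J. \<integral>\<^sup>+x. ennreal (exp (l * Y x)) \<partial>M)"
  proof -
    have "(\<integral>\<^sup>+\<omega>. (\<Prod>j\<in>J. ennreal (exp (l * Y (\<omega> j)))) \<partial>iid_sample M N)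
        = (\<Prod>j\<in>J. \<integral>\<^sup>+x. ennreal (exp (l * Y x)) \<partial>M)"
      by (rule nn_integral_iid_sample_prod[OF J]) measurable
    moreover have "(\<lambda>\<omega>. \<Prod>j\<in>J. ennreal (exp (l * Y (\<omega> j)))) \<in> borel_measurable (iid_sample M N)"
    proof (rule borel_measurable_prod_ennreal, rule measurable_iid_sample_compose)
      show "\<And>j. j \<in> J \<Longrightarrow> j < N" using J by auto
    qed measurable
    ultimately show ?thesis
      by (simp only: nn_integral_cmult)
  qed
  also have "\<dots> \<le> ennreal (exp (- l * t)) * (\<Prod>j\<in>J. ennreal c)"
    by (intro mult_left_mono prod_mono_ennreal mgf) auto
  finally show ?thesis
    using c by (simp add: S.emeasure_eq_measure prod_ennreal ennreal_power ennreal_mult[symmetric])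
qed

lemma iid_sample_sum_Markov:
  assumes J: "J \<subseteq> {..<N}" and [measurable]: "Y \<in> borel_measurable M" and Y: "\<And>x. 0 \<le> Y x"
    and mean: "(\<integral>\<^sup>+x. ennreal (Y x) \<partial>M) \<le> ennreal G" and G: "0 \<le> G" and r: "0 < r"
  shows "measure (iid_sample M N) {\<omega> \<in> space (iid_sample M N). r \<le> (\<Sum>j\<in>J. Y (\<omega> j))}
    \<le> real (card J) * G / r"
proof -
  interpret S: prob_space "iid_sample M N" by (rule prob_space_iid_sample)
  have [measurable]: "(\<lambda>\<omega>. \<Sum>j\<in>J. Y (\<omega> j)) \<in> borel_measurable (iid_sample M N)"
    using J by (intro borel_measurable_iid_sample_sum) auto
  have meas_j: "(\<lambda>\<omega>. ennreal (Y (\<omega> j))) \<in> borel_measurable (iid_sample M N)" if "j \<in> J" for j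
  proof (rule measurable_iid_sample_compose)
    show "j < N" using J that by auto
  qed measurable
  let ?A = "{\<omega> \<in> space (iid_sample M N). r \<le> (\<Sum>j\<in>J. Y (\<omega> j))}"
  have "emeasure (iid_sample M N) ?A \<le> (\<integral>\<^sup>+\<omega>. ennreal (1 / r) * (\<Sum>j\<in>J. ennreal (Y (\<omega> j))) \<partial>iid_sample M N)"
  proof (subst nn_integral_indicator[symmetric], measurable, intro nn_integral_mono)
    fix \<omega>
    show "indicator ?A \<omega> \<le> ennreal (1 / r) * (\<Sum>j\<in>J. ennreal (Y (\<omega> j)))"
      using r Y by (auto simp: indicator_def sum_ennreal sum_nonneg ennreal_mult[symmetric])
  qed
  also have "\<dots> = ennreal (1 / r) * (\<Sum>j\<in>J. \<integral>\<^sup>+x. ennreal (Y x) \<partial>M)"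
  proof -
    have comp: "(\<integral>\<^sup>+\<omega>. ennreal (Y (\<omega> j)) \<partial>iid_sample M N) = (\<integral>\<^sup>+x. ennreal (Y x) \<partial>M)" if "j \<in> J" for j
    proof (rule nn_integral_iid_sample_component)
      show "j < N" using J that by auto
    qed measurable
    have "(\<lambda>\<omega>. \<Sum>j\<in>J. ennreal (Y (\<omega> j))) \<in> borel_measurable (iid_sample M N)"
      by (rule borel_measurable_sum) (rule meas_j)
    then have "(\<integral>\<^sup>+\<omega>. ennreal (1 / r) * (\<Sum>j\<in>J. ennreal (Y (\<omega> j))) \<partial>iid_sample M N)
        = ennreal (1 / r) * (\<Sum>j\<in>J. \<integral>\<^sup>+\<omega>. ennreal (Y (\<omega> j)) \<partial>iid_sample M N)"
      by (simp only: nn_integral_cmult nn_integral_sum[OF meas_j])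
    moreover have "(\<Sum>j\<in>J. \<integral>\<^sup>+\<omega>. ennreal (Y (\<omega> j)) \<partial>iid_sample M N) = (\<Sum>j\<in>J. \<integral>\<^sup>+x. ennreal (Y x) \<partial>M)"
      by (rule sum.cong[OF refl comp])
    ultimately show ?thesis
      by (simp only:)
  qed
  also have "\<dots> \<le> ennreal (1 / r) * (\<Sum>j\<in>J. ennreal G)"
    by (intro mult_left_mono sum_mono mean) auto
  finally show ?thesis
    using G r by (simp add: S.emeasure_eq_measure ennreal_mult[symmetric] ennreal_of_nat_eq_real_of_nat)
qed

lemma nn_integral_exp_centered_indicator_le:
  assumes E: "E \<in> events" and a: "\<bar>a\<bar> \<le> 1"
  shows "(\<integral>\<^sup>+x. ennreal (exp (a * (indicator E x - prob E))) \<partial>M) \<le> ennreal (exp (a\<^sup>2 * prob E))"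
proof -
  define p where "p = prob E"
  have p: "0 \<le> p" "p \<le> 1" by (auto simp: p_def)
  have "(\<integral>\<^sup>+x. ennreal (exp (a * (indicator E x - p))) \<partial>M)
      = (\<integral>\<^sup>+x. ennreal (exp (a * (1 - p))) * indicator E x + ennreal (exp (a * (0 - p))) * indicator (space M - E) x \<partial>M)"
    by (intro nn_integral_cong) (auto simp: indicator_def)
  also have "\<dots> = ennreal (exp (a * (1 - p)) * p + exp (a * (0 - p)) * (1 - p))"
    using E by (simp add: nn_integral_add nn_integral_cmult_indicator emeasure_eq_measure prob_compl p_def
        ennreal_mult[symmetric] ennreal_plus[symmetric] del: ennreal_plus)
  also have "\<dots> \<le> ennreal (exp (a\<^sup>2 * p))"
  proof (intro ennreal_leI)
    have "\<bar>a * (1 - p)\<bar> \<le> 1" "\<bar>a * (0 - p)\<bar> \<le> 1"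
      unfolding abs_mult using a p by (auto intro!: mult_le_one)
    then have "exp (a * (1 - p)) * p + exp (a * (0 - p)) * (1 - p)
        \<le> (1 + a * (1 - p) + (a * (1 - p))\<^sup>2) * p + (1 + a * (0 - p) + (a * (0 - p))\<^sup>2) * (1 - p)"
      using p by (intro add_mono mult_right_mono exp_le_quadratic) auto
    also have "\<dots> = 1 + a\<^sup>2 * p * (1 - p)"
      by (simp add: power2_eq_square algebra_simps)
    also have "\<dots> \<le> 1 + a\<^sup>2 * p"
      using p by (simp add: mult_left_le)
    also have "\<dots> \<le> exp (a\<^sup>2 * p)"
      by (rule exp_ge_add_one_self)
    finally show "exp (a * (1 - p)) * p + exp (a * (0 - p)) * (1 - p) \<le> exp (a\<^sup>2 * p)" .
  qed
  finally show ?thesis by (simp add: p_def)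
qed

end

lemma Chernoff_exponent_choice:
  fixes q c :: real
  assumes q: "0 \<le> q" and c: "0 \<le> c"
  shows "\<exists>l. 0 \<le> l \<and> l \<le> 1 \<and> - l * (c * sqrt q + c\<^sup>2) + l\<^sup>2 * q \<le> - (c\<^sup>2 / 4)"
proof -
  define t where "t = c * sqrt q + c\<^sup>2"
  have tc: "c\<^sup>2 \<le> t" "c * sqrt q \<le> t" "0 \<le> t" using q c by (simp_all add: t_def)
  show ?thesis
  proof (cases "t \<le> 2 * q")
    case True
    show ?thesis
    proof (cases "q = 0")
      case False
      have "c\<^sup>2 * q \<le> t\<^sup>2"
        using power_mono[OF tc(2), of 2] c q by (simp add: power_mult_distrib)
      then have "- (t / (2 * q)) * t + (t / (2 * q))\<^sup>2 * q \<le> - (c\<^sup>2 / 4)"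
        using False q by (simp add: power2_eq_square field_simps)
      moreover have "0 \<le> t / (2 * q)" "t / (2 * q) \<le> 1"
        using True False q tc by (auto simp: zero_le_divide_iff)
      ultimately show ?thesis unfolding t_def by blast
    qed (use True tc in \<open>auto intro!: exI[of _ 0]\<close>)
  next
    case False
    then have "q - t \<le> - (c\<^sup>2 / 4)"
      using tc zero_le_power2[of c] by linarith
    then show ?thesis
      by (intro exI[of _ 1]) (simp add: t_def)
  qed
qed

context prob_space
begin

text \<open>A Bernstein-type bound rather than Hoeffding's: the deviation scale c sqrt(np) adapts to
  p = prob E, which is what controls the conformal p-values near 0.\<close>

lemma iid_sample_count_deviation:
  assumes E [measurable]: "E \<in> events" and J: "J \<subseteq> {..<N}" and c: "0 \<le> c" and \<sigma>: "\<bar>\<sigma>\<bar> = 1"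
  shows "measure (iid_sample M N) {\<omega> \<in> space (iid_sample M N).
      c * sqrt (card J * prob E) + c\<^sup>2 \<le> \<sigma> * ((\<Sum>j\<in>J. indicator E (\<omega> j)) - card J * prob E)}
    \<le> exp (- (c\<^sup>2 / 4))"
proof -
  define p where "p = prob E"
  define n where "n = card J"
  obtain l where l: "0 \<le> l" "l \<le> 1" "- l * (c * sqrt (n * p) + c\<^sup>2) + l\<^sup>2 * (n * p) \<le> - (c\<^sup>2 / 4)"
    using Chernoff_exponent_choice[of "n * p" c] c by (auto simp: p_def)
  define Y where "Y x = \<sigma> * (indicator E x - p)" for x
  have [measurable]: "Y \<in> borel_measurable M" unfolding Y_def[abs_def] by measurable
  have sum: "(\<Sum>j\<in>J. Y (\<omega> j)) = \<sigma> * ((\<Sum>j\<in>J. indicator E (\<omega> j)) - n * p)" for \<omega>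
    by (simp add: Y_def sum_distrib_left[symmetric] sum_subtractf n_def)
  have "\<sigma>\<^sup>2 = 1" using power2_abs[of \<sigma>] \<sigma> by simp
  then have "(\<integral>\<^sup>+x. ennreal (exp (l * Y x)) \<partial>M) \<le> ennreal (exp (l\<^sup>2 * p))"
    using nn_integral_exp_centered_indicator_le[OF E, of "l * \<sigma>"] l \<sigma>
    by (simp add: Y_def p_def abs_mult power_mult_distrib mult.assoc)
  then have "measure (iid_sample M N) {\<omega> \<in> space (iid_sample M N). c * sqrt (n * p) + c\<^sup>2 \<le> (\<Sum>j\<in>J. Y (\<omega> j))}
      \<le> exp (- l * (c * sqrt (n * p) + c\<^sup>2)) * exp (l\<^sup>2 * p) ^ n"
    using iid_sample_sum_Chernoff[OF J] l by (simp add: n_def)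
  also have "\<dots> = exp (- l * (c * sqrt (n * p) + c\<^sup>2) + l\<^sup>2 * (n * p))"
    by (simp add: exp_of_nat_mult[symmetric] mult_exp_exp mult_ac)
  also have "\<dots> \<le> exp (- (c\<^sup>2 / 4))"
    using l(3) by simp
  finally show ?thesis
    unfolding sum by (simp add: n_def p_def)
qed

end


section \<open>Conformal p-values as perturbed uniforms\<close>

text \<open>For a test point whose transform is v, if the calibration rank K is within
  c sqrt(n v) + c^2 + c + 1 of n v, the adjusted Fisher term -2 log h(u) is at most
  fisher_term_bound n c e v and within fisher_term_error n c e v of -2 log v,
  where e is the DKWM margin.\<close>

definition rank_error :: "nat \<Rightarrow> real \<Rightarrow> real \<Rightarrow> real" where
  "rank_error n c v = c * sqrt (v / n) + (c\<^sup>2 + c + 2) / n"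

definition fisher_term_bound :: "nat \<Rightarrow> real \<Rightarrow> real \<Rightarrow> real \<Rightarrow> real" where
  "fisher_term_bound n c e v = - 2 * ln (min (v + e) 1) + 4 * rank_error n c v / (v + e)"

definition fisher_term_error :: "nat \<Rightarrow> real \<Rightarrow> real \<Rightarrow> real \<Rightarrow> real" where
  "fisher_term_error n c e v =
     (if v \<le> 0 then 0 else 2 * (ln (min (v + e) 1) - ln v) + 4 * rank_error n c v / (v + e))"

definition rank_error_mean :: "nat \<Rightarrow> real \<Rightarrow> real \<Rightarrow> real" where
  "rank_error_mean n c e = 12 * c / sqrt n + 4 * (c\<^sup>2 + c + 2) / n * (ln (1 + e) - ln e)"

lemma borel_measurable_fisher_term [measurable]:
  "rank_error n c \<in> borel_measurable borel"
  "fisher_term_bound n c e \<in> borel_measurable borel"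
  "fisher_term_error n c e \<in> borel_measurable borel"
  unfolding rank_error_def[abs_def] fisher_term_bound_def[abs_def] fisher_term_error_def[abs_def]
  by measurable

lemma rank_error_nonneg: "0 \<le> v \<Longrightarrow> 0 \<le> c \<Longrightarrow> 0 \<le> rank_error n c v"
  by (simp add: rank_error_def)

lemma rank_error_le_half:
  assumes v: "0 \<le> v" and n: "0 < n" and c: "0 \<le> c" and ce: "(3 * c\<^sup>2 + 2 * c + 4) / n \<le> e"
  shows "rank_error n c v \<le> (v + e) / 2"
proof -
  have "0 \<le> (sqrt v - c / sqrt n)\<^sup>2" by simp
  also have "\<dots> = v - 2 * (c * sqrt (v / n)) + c\<^sup>2 / n"
    using v n by (simp add: power2_eq_square field_simps real_sqrt_divide)
  finally have "c * sqrt (v / n) \<le> v / 2 + c\<^sup>2 / (2 * real n)" by simp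
  moreover have "c\<^sup>2 / (2 * real n) + (c\<^sup>2 + c + 2) / n = ((3 * c\<^sup>2 + 2 * c + 4) / n) / 2"
    using n by (simp add: field_simps)
  moreover have "((3 * c\<^sup>2 + 2 * c + 4) / n) / 2 \<le> e / 2"
    by (rule divide_right_mono[OF ce]) simp
  ultimately show ?thesis
    unfolding rank_error_def by argo
qed

lemma abs_rank_pvalue_diff_le:
  fixes K v c :: real
  assumes n: "0 < n" and v: "0 \<le> v" "v \<le> 1" and K: "\<bar>K - n * v\<bar> \<le> c * sqrt (n * v) + c\<^sup>2 + c + 1"
  shows "\<bar>(1 + K) / (real n + 1) - v\<bar> \<le> rank_error n c v"
proof -
  define D where "D = c * sqrt (n * v) + c\<^sup>2 + c + 1"
  have "\<bar>(1 + K) / (real n + 1) - v\<bar> = \<bar>(K - n * v) + (1 - v)\<bar> / (real n + 1)"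
    by (simp add: field_simps)
  also have "\<dots> \<le> (D + 1) / (real n + 1)"
    using K v unfolding D_def by (intro divide_right_mono) auto
  also have "\<dots> \<le> (D + 1) / n"
    using K n by (intro divide_left_mono) (auto simp: D_def)
  also have "\<dots> = rank_error n c v"
    using n v by (simp add: D_def rank_error_def field_simps real_sqrt_divide real_sqrt_mult)
  finally show ?thesis .
qed

lemma abs_ln_min_add_diff_le:
  fixes u v e b :: real
  assumes v: "0 \<le> v" "v \<le> 1" and e: "0 < e" "e \<le> 1" and uv: "\<bar>u - v\<bar> \<le> b" and b: "b \<le> (v + e) / 2"
  shows "\<bar>ln (min (u + e) 1) - ln (min (v + e) 1)\<bar> \<le> 2 * b / (v + e)"
proof -
  define a a' where "a = min (u + e) 1" and "a' = min (v + e) 1"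
  have lower: "(v + e) / 2 \<le> a" "(v + e) / 2 \<le> a'" "0 < (v + e) / 2"
    using uv b v e by (auto simp: a_def a'_def abs_le_iff)
  have "0 \<le> b"
    using uv abs_ge_zero[of "u - v"] by linarith
  with uv have "\<bar>a - a'\<bar> \<le> b"
    by (auto simp: a_def a'_def min_def abs_if)
  then have "\<bar>ln a - ln a'\<bar> \<le> b / ((v + e) / 2)"
    using abs_ln_diff_le[of a a'] lower by (smt (verit) frac_le min_def abs_ge_zero)
  then show ?thesis by (simp add: a_def a'_def mult.commute)
qed

lemma neg_ln_dkwm_pvalue_bounds:
  fixes K v c e :: real
  assumes n: "0 < n" and v: "0 \<le> v" "v \<le> 1" and e: "0 < e" "e < 1" and c: "0 \<le> c"
    and ce: "(3 * c\<^sup>2 + 2 * c + 4) / n \<le> e"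
    and K: "\<bar>K - n * v\<bar> \<le> c * sqrt (n * v) + c\<^sup>2 + c + 1"
  shows "- 2 * ln (min ((1 + K) / (real n + 1) + e) 1) \<le> fisher_term_bound n c e v"
    and "0 < v \<Longrightarrow> \<bar>- 2 * ln (min ((1 + K) / (real n + 1) + e) 1) - (- 2 * ln v)\<bar> \<le> fisher_term_error n c e v"
proof -
  have close: "\<bar>ln (min ((1 + K) / (real n + 1) + e) 1) - ln (min (v + e) 1)\<bar> \<le> 2 * rank_error n c v / (v + e)"
    using abs_rank_pvalue_diff_le[OF n v K] rank_error_le_half[OF v(1) n c ce] v e
    by (intro abs_ln_min_add_diff_le) auto
  then show "- 2 * ln (min ((1 + K) / (real n + 1) + e) 1) \<le> fisher_term_bound n c e v"
    by (simp add: fisher_term_bound_def abs_le_iff)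
  assume "0 < v"
  then have "ln v \<le> ln (min (v + e) 1)"
    using v e by simp
  with close \<open>0 < v\<close> show "\<bar>- 2 * ln (min ((1 + K) / (real n + 1) + e) 1) - (- 2 * ln v)\<bar> \<le> fisher_term_error n c e v"
    by (simp add: fisher_term_error_def abs_le_iff)
qed

lemma fisher_term_bound_between:
  assumes v: "0 \<le> v" "v \<le> 1" and e: "0 < e" "e < 1" and n: "0 < n" and c: "0 \<le> c"
    and ce: "(3 * c\<^sup>2 + 2 * c + 4) / n \<le> e"
  shows "0 \<le> fisher_term_bound n c e v" "fisher_term_bound n c e v \<le> - 2 * ln e + 2"
    and "0 < v \<Longrightarrow> (fisher_term_bound n c e v)\<^sup>2 \<le> 2 * (- 2 * ln v)\<^sup>2 + 8"
proof -
  define a d where "a = - 2 * ln (min (v + e) 1)" and "d = 4 * rank_error n c v / (v + e)"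
  have ve: "0 < v + e" using v e by simp
  have a: "0 \<le> a" "a \<le> - 2 * ln e"
    using v e by (auto simp: a_def)
  have "4 * rank_error n c v \<le> 2 * (v + e)"
    using rank_error_le_half[OF v(1) n c ce] by simp
  then have d: "0 \<le> d" "d \<le> 2"
    using ve rank_error_nonneg[OF v(1) c] by (auto simp: d_def divide_le_eq)
  have bound: "fisher_term_bound n c e v = a + d"
    by (simp add: fisher_term_bound_def a_def d_def)
  show "0 \<le> fisher_term_bound n c e v" "fisher_term_bound n c e v \<le> - 2 * ln e + 2"
    using a d by (simp_all add: bound)
  assume "0 < v"
  then have "a \<le> - 2 * ln v"
    using v e by (simp add: a_def)
  then have "a\<^sup>2 \<le> (- 2 * ln v)\<^sup>2"
    using a by (intro power_mono) auto
  moreover have "(a + d)\<^sup>2 \<le> 2 * a\<^sup>2 + 2 * d\<^sup>2"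
    using zero_le_power2[of "a - d"] by (simp add: power2_eq_square algebra_simps)
  moreover have "d\<^sup>2 \<le> 4"
    using d power_mono[of d 2 2] by simp
  ultimately show "(fisher_term_bound n c e v)\<^sup>2 \<le> 2 * (- 2 * ln v)\<^sup>2 + 8"
    unfolding bound by linarith
qed

lemma rank_error_div_le:
  assumes v: "0 \<le> v" and e: "0 < e" and n: "0 < n" and c: "0 \<le> c"
  shows "4 * rank_error n c v / (v + e)
    \<le> 4 * c / sqrt n * (1 / sqrt (v + e)) + 4 * (c\<^sup>2 + c + 2) / n * (1 / (v + e))"
proof -
  define b r where "b = sqrt (v + e)" and "r = sqrt n"
  have b: "0 < b" "v + e = b * b" using v e by (simp_all add: b_def)
  have r: "0 < r" using n by (simp add: r_def)
  have "sqrt (v / n) / (v + e) = (sqrt v / r) / (b * b)"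
    unfolding r_def b(2)[symmetric] by (simp add: real_sqrt_divide)
  also have "\<dots> \<le> (b / r) / (b * b)"
    using v e r b(1) by (intro divide_right_mono) (auto simp: b_def)
  also have "\<dots> = 1 / r * (1 / b)"
    using b r by simp
  finally have "4 * c * (sqrt (v / n) / (v + e)) \<le> 4 * c * (1 / r * (1 / b))"
    using c by (intro mult_left_mono) auto
  then show ?thesis
    by (simp add: rank_error_def add_divide_distrib distrib_left b_def r_def)
qed

lemma one_sub_add_mult_ln_nonneg:
  fixes e :: real
  assumes "0 < e"
  shows "0 \<le> 1 - e + e * ln e"
  using ln_le_minus_one[of "1 / e"] assms mult_left_mono[of "1 - 1 / e" "ln e" e]
  by (simp add: ln_div right_diff_distrib)

lemma nn_integral_Icc_FTC:
  fixes F f :: "real \<Rightarrow> real"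
  assumes ab: "a \<le> b" and F: "\<And>x. a \<le> x \<Longrightarrow> x \<le> b \<Longrightarrow> (F has_real_derivative f x) (at x)"
    and f: "\<And>x. a \<le> x \<Longrightarrow> x \<le> b \<Longrightarrow> 0 \<le> f x"
  shows "(\<integral>\<^sup>+x. ennreal (f x) * indicator {a..b} x \<partial>lborel) = ennreal (F b - F a)"
proof (rule nn_integral_has_integral_lebesgue')
  show "(f has_integral F b - F a) {a..b}"
    using F by (intro fundamental_theorem_of_calculus[OF ab])
      (auto intro: has_field_derivative_at_within simp: has_real_derivative_iff_has_vector_derivative[symmetric])
qed (use f in auto)

lemma nn_integral_neg_ln_min_add:
  fixes e :: real
  assumes e: "0 < e" "e < 1"
  shows "(\<integral>\<^sup>+v. ennreal (- 2 * ln (min (v + e) 1)) * indicator {0..1} v \<partial>lborel)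
    = ennreal (2 - 2 * e + 2 * e * ln e)"
proof -
  have "(\<integral>\<^sup>+v. ennreal (- 2 * ln (min (v + e) 1)) * indicator {0..1} v \<partial>lborel)
      = (\<integral>\<^sup>+v. ennreal (- 2 * ln (v + e)) * indicator {0..1 - e} v \<partial>lborel)"
    using e by (intro nn_integral_cong) (auto simp: indicator_def min_def)
  also have "\<dots> = ennreal ((- 2 * ((1 - e + e) * ln (1 - e + e) - (1 - e))) - (- 2 * ((0 + e) * ln (0 + e) - 0)))"
    using e by (intro nn_integral_Icc_FTC[where F = "\<lambda>v. - 2 * ((v + e) * ln (v + e) - v)"])
      (auto intro!: derivative_eq_intros)
  finally show ?thesis by (simp add: mult.assoc)
qed

lemma nn_integral_inverse_sqrt_add_le:
  fixes e :: real
  assumes e: "0 < e" "e < 1"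
  shows "(\<integral>\<^sup>+v. ennreal (1 / sqrt (v + e)) * indicator {0..1} v \<partial>lborel) \<le> ennreal 3"
proof -
  have "(\<integral>\<^sup>+v. ennreal (1 / sqrt (v + e)) * indicator {0..1} v \<partial>lborel) = ennreal (2 * sqrt (1 + e) - 2 * sqrt (0 + e))"
    using e by (intro nn_integral_Icc_FTC[where F = "\<lambda>v. 2 * sqrt (v + e)"])
      (auto intro!: derivative_eq_intros simp: field_simps)
  also have "\<dots> \<le> ennreal 3"
  proof (intro ennreal_leI)
    have "sqrt (1 + e) \<le> sqrt 2" using e by simp
    also have "sqrt 2 \<le> (3 / 2 :: real)" by (rule real_le_lsqrt) (auto simp: power2_eq_square)
    finally have "sqrt (1 + e) \<le> 3 / 2" .
    moreover have "0 \<le> sqrt e" using e by simp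
    ultimately show "2 * sqrt (1 + e) - 2 * sqrt (0 + e) \<le> 3" by (simp only: add_0_left)
  qed
  finally show ?thesis .
qed

lemma nn_integral_inverse_add:
  fixes e :: real
  assumes e: "0 < e" "e < 1"
  shows "(\<integral>\<^sup>+v. ennreal (1 / (v + e)) * indicator {0..1} v \<partial>lborel) = ennreal (ln (1 + e) - ln e)"
proof -
  have "(\<integral>\<^sup>+v. ennreal (1 / (v + e)) * indicator {0..1} v \<partial>lborel) = ennreal (ln (1 + e) - ln (0 + e))"
    using e by (intro nn_integral_Icc_FTC[where F = "\<lambda>v. ln (v + e)"])
      (auto intro!: derivative_eq_intros simp: field_simps)
  then show ?thesis by simp
qed

lemma nn_integral_rank_error_le:
  assumes e: "0 < e" "e < 1" and n: "0 < n" and c: "0 \<le> c"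
  shows "(\<integral>\<^sup>+v. ennreal (4 * rank_error n c v / (v + e)) * indicator {0..1} v \<partial>lborel)
    \<le> ennreal (rank_error_mean n c e)"
proof -
  define k1 k2 where "k1 = 4 * c / sqrt n" and "k2 = 4 * (c\<^sup>2 + c + 2) / n"
  have k: "0 \<le> k1" "0 \<le> k2" using c n by (auto simp: k1_def k2_def)
  have "(\<integral>\<^sup>+v. ennreal (4 * rank_error n c v / (v + e)) * indicator {0..1} v \<partial>lborel)
      \<le> (\<integral>\<^sup>+v. ennreal k1 * (ennreal (1 / sqrt (v + e)) * indicator {0..1} v)
          + ennreal k2 * (ennreal (1 / (v + e)) * indicator {0..1} v) \<partial>lborel)"
  proof (intro nn_integral_mono)
    fix v :: real
    show "ennreal (4 * rank_error n c v / (v + e)) * indicator {0..1} v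
        \<le> ennreal k1 * (ennreal (1 / sqrt (v + e)) * indicator {0..1} v)
          + ennreal k2 * (ennreal (1 / (v + e)) * indicator {0..1} v)"
      using rank_error_div_le[of v e n c] e n c k
      by (auto simp: indicator_def k1_def k2_def ennreal_mult[symmetric] ennreal_plus[symmetric]
          simp del: ennreal_plus intro!: ennreal_leI)
  qed
  also have "\<dots> = ennreal k1 * (\<integral>\<^sup>+v. ennreal (1 / sqrt (v + e)) * indicator {0..1} v \<partial>lborel)
      + ennreal k2 * (\<integral>\<^sup>+v. ennreal (1 / (v + e)) * indicator {0..1} v \<partial>lborel)"
    by (simp add: nn_integral_add nn_integral_cmult)
  also have "\<dots> \<le> ennreal k1 * ennreal 3 + ennreal k2 * ennreal (ln (1 + e) - ln e)"
    using nn_integral_inverse_sqrt_add_le[OF e] nn_integral_inverse_add[OF e]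
    by (intro add_mono mult_left_mono) auto
  also have "\<dots> = ennreal (k1 * 3 + k2 * (ln (1 + e) - ln e))"
    using k e by (simp add: ennreal_plus ennreal_mult)
  also have "k1 * 3 + k2 * (ln (1 + e) - ln e) = rank_error_mean n c e"
    by (simp add: rank_error_mean_def k1_def k2_def)
  finally show ?thesis .
qed

section \<open>The global null\<close>

lemma sum_indicator_eq_card:
  fixes n :: nat and \<omega> :: "nat \<Rightarrow> 'a"
  shows "(\<Sum>j<n. indicator E (\<omega> j) :: real) = real (card {j. j < n \<and> \<omega> j \<in> E})"
proof -
  have "(\<Sum>j<n. indicator E (\<omega> j) :: real) = (\<Sum>j\<in>{j. j < n \<and> \<omega> j \<in> E}. 1)"
    by (rule sum.mono_neutral_cong_right) (auto simp: indicator_def)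
  then show ?thesis by simp
qed

definition dkwm_margin :: "nat \<Rightarrow> real \<Rightarrow> real" where
  "dkwm_margin n \<delta> = sqrt (ln (2 / \<delta>) / (2 * real n))"

lemma h_dkwm_eq: "h_dkwm n \<delta> u = min (u + dkwm_margin n \<delta>) 1"
  by (simp add: h_dkwm_def dkwm_margin_def)

lemma sum_test_block:
  fixes n m :: nat
  shows "(\<Sum>j\<in>(\<lambda>i. n + i) ` {..<m}. f j) = (\<Sum>i<m. f (n + i))"
  by (subst sum.reindex) (auto simp: inj_on_def)

lemma test_block:
  fixes n m :: nat
  shows "(\<lambda>i. n + i) ` {..<m} \<subseteq> {..<n + m}" "card ((\<lambda>i. n + i) ` {..<m}) = m"
  by (auto simp: card_image)

definition fisher_term_bound_mean :: "nat \<Rightarrow> real \<Rightarrow> real \<Rightarrow> real" where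
  "fisher_term_bound_mean n c e = 2 - 2 * e + 2 * e * ln e + rank_error_mean n c e"

definition fisher_term_error_mean :: "nat \<Rightarrow> real \<Rightarrow> real \<Rightarrow> real" where
  "fisher_term_error_mean n c e = 2 * e - 2 * e * ln e + rank_error_mean n c e"

lemma rank_error_mean_nonneg: "0 < e \<Longrightarrow> 0 \<le> c \<Longrightarrow> 0 \<le> rank_error_mean n c e"
  by (simp add: rank_error_mean_def)

lemma fisher_term_means_nonneg:
  assumes "0 < e" "e < 1" "0 \<le> c"
  shows "0 \<le> fisher_term_bound_mean n c e" "0 \<le> fisher_term_error_mean n c e"
  using one_sub_add_mult_ln_nonneg[of e] rank_error_mean_nonneg[of e c n] mult_nonneg_nonpos[of e "ln e"] assms
  by (simp_all add: fisher_term_bound_mean_def fisher_term_error_mean_def)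

lemma (in prob_space) prob_threshold_perturbation:
  fixes T T' :: "'a \<Rightarrow> real"
  assumes [measurable]: "T \<in> borel_measurable M" "T' \<in> borel_measurable M" "B \<in> events"
    and close: "\<And>\<omega>. \<omega> \<in> space M \<Longrightarrow> \<omega> \<notin> B \<Longrightarrow> \<bar>T \<omega> - T' \<omega>\<bar> < r"
  shows "prob {\<omega> \<in> space M. q \<le> T \<omega>} \<le> prob B + prob {\<omega> \<in> space M. q - r < T' \<omega>}"
    and "prob {\<omega> \<in> space M. q + r \<le> T' \<omega>} \<le> prob B + prob {\<omega> \<in> space M. q \<le> T \<omega>}"
proof -
  have "{\<omega> \<in> space M. q \<le> T \<omega>} \<subseteq> B \<union> {\<omega> \<in> space M. q - r < T' \<omega>}"
  proof
    fix \<omega> assume "\<omega> \<in> {\<omega> \<in> space M. q \<le> T \<omega>}"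
    then show "\<omega> \<in> B \<union> {\<omega> \<in> space M. q - r < T' \<omega>}"
      using close[of \<omega>] by (cases "\<omega> \<in> B") (auto simp: abs_diff_less_iff)
  qed
  then have "prob {\<omega> \<in> space M. q \<le> T \<omega>} \<le> prob (B \<union> {\<omega> \<in> space M. q - r < T' \<omega>})"
    by (rule finite_measure_mono) measurable
  also have "\<dots> \<le> prob B + prob {\<omega> \<in> space M. q - r < T' \<omega>}"
    by (rule measure_Un_le) measurable
  finally show "prob {\<omega> \<in> space M. q \<le> T \<omega>} \<le> prob B + prob {\<omega> \<in> space M. q - r < T' \<omega>}" .
  have "{\<omega> \<in> space M. q + r \<le> T' \<omega>} \<subseteq> B \<union> {\<omega> \<in> space M. q \<le> T \<omega>}"
  proof
    fix \<omega> assume "\<omega> \<in> {\<omega> \<in> space M. q + r \<le> T' \<omega>}"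
    then show "\<omega> \<in> B \<union> {\<omega> \<in> space M. q \<le> T \<omega>}"
      using close[of \<omega>] by (cases "\<omega> \<in> B") (auto simp: abs_diff_less_iff)
  qed
  then have "prob {\<omega> \<in> space M. q + r \<le> T' \<omega>} \<le> prob (B \<union> {\<omega> \<in> space M. q \<le> T \<omega>})"
    by (rule finite_measure_mono) measurable
  also have "\<dots> \<le> prob B + prob {\<omega> \<in> space M. q \<le> T \<omega>}"
    by (rule measure_Un_le) measurable
  finally show "prob {\<omega> \<in> space M. q + r \<le> T' \<omega>} \<le> prob B + prob {\<omega> \<in> space M. q \<le> T \<omega>}" .
qed

lemma dkwm_margin_eq: "0 < n \<Longrightarrow> dkwm_margin n \<delta> = sqrt (ln (2 / \<delta>) / 2) / sqrt n"
  by (simp add: dkwm_margin_def real_sqrt_divide real_sqrt_mult)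

lemma exp_mult_power_le:
  fixes l q K Z :: real
  assumes l: "0 \<le> l" and q: "2 * real m - K * sqrt m \<le> q" and pos: "0 \<le> 1 + l * Z + 24 * l\<^sup>2"
  shows "exp (- l * q) * (1 + l * Z + 24 * l\<^sup>2) ^ m
    \<le> exp (l * K * sqrt m + real m * l * (Z - 2) + 24 * real m * l\<^sup>2)"
proof -
  have "exp (- l * q) * (1 + l * Z + 24 * l\<^sup>2) ^ m
      \<le> exp (- l * (2 * real m - K * sqrt m)) * exp (l * Z + 24 * l\<^sup>2) ^ m"
    using q l pos exp_ge_add_one_self[of "l * Z + 24 * l\<^sup>2"]
    by (intro mult_mono power_mono) (auto simp: add.assoc mult_left_mono)
  also have "\<dots> = exp (l * K * sqrt m + real m * l * (Z - 2) + 24 * real m * l\<^sup>2)"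
    by (simp add: exp_of_nat_mult[symmetric] mult_exp_exp algebra_simps)
  finally show ?thesis .
qed

definition log_sq_rate :: "real \<Rightarrow> real \<Rightarrow> real" where
  "log_sq_rate \<delta> \<gamma> = (let e0 = sqrt (ln (2 / \<delta>) / 2) in min ((e0 / 48)\<^sup>2 / 8) (\<gamma> * (e0 / 96) * e0 / 16))"

lemma log_sq_rate_pos:
  assumes "0 < \<delta>" "\<delta> < 1" "0 < \<gamma>"
  shows "0 < log_sq_rate \<delta> \<gamma>"
proof -
  have "1 < 2 / \<delta>" using assms by (simp add: field_simps)
  then have "0 < ln (2 / \<delta>)" by (rule ln_gt_zero)
  then show ?thesis using assms by (simp add: log_sq_rate_def Let_def)
qed

lemma Chernoff_exponent_log_sq:
  fixes a b \<gamma> K L Z l :: real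
  assumes n: "0 < n" and \<gamma>: "0 < \<gamma>" and m: "real m = \<gamma> * real n" and a: "a = b / 96"
    and l: "l = a * L / sqrt n" "0 \<le> l" and shift: "Z - 2 \<le> - (b / 2 * L / sqrt n)"
    and slack: "a * (K * sqrt \<gamma>) * L \<le> \<gamma> * a * b / 8 * L\<^sup>2"
  shows "l * K * sqrt m + real m * l * (Z - 2) + 24 * real m * l\<^sup>2 \<le> - (\<gamma> * a * b / 8) * L\<^sup>2"
proof -
  have "m * l * (Z - 2) \<le> m * l * (- (b / 2 * L / sqrt n))"
    using shift l(2) by (intro mult_left_mono) auto
  moreover have "l * K * sqrt m = a * (K * sqrt \<gamma>) * L" "24 * real m * l\<^sup>2 = 24 * \<gamma> * a\<^sup>2 * L\<^sup>2"
    "m * l * (- (b / 2 * L / sqrt n)) = - (\<gamma> * a * (b / 2) * L\<^sup>2)"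
    using n \<gamma> by (simp_all add: m l(1) real_sqrt_mult power2_eq_square field_simps)
  moreover have "24 * \<gamma> * a\<^sup>2 * L\<^sup>2 - \<gamma> * a * (b / 2) * L\<^sup>2 = - 2 * (\<gamma> * a * b / 8) * L\<^sup>2"
    by (simp add: a power2_eq_square field_simps)
  ultimately show ?thesis
    using slack by linarith
qed

lemma Gaussian_tail_split:
  fixes C c0 L K :: real
  assumes "K * exp (- (c0\<^sup>2 / 8 * L\<^sup>2)) \<le> 1 / 2" "C \<le> c0\<^sup>2 / 8" "0 \<le> K"
  shows "K * exp (- ((c0 * L)\<^sup>2 / 4)) \<le> exp (- C * L\<^sup>2) / 2"
proof -
  have "exp (- ((c0 * L)\<^sup>2 / 4)) = exp (- (c0\<^sup>2 / 8 * L\<^sup>2)) * exp (- (c0\<^sup>2 / 8 * L\<^sup>2))"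
    by (simp add: power_mult_distrib flip: exp_add)
  also have "\<dots> \<le> exp (- (c0\<^sup>2 / 8 * L\<^sup>2)) * exp (- C * L\<^sup>2)"
    using mult_right_mono[OF assms(2), of "L\<^sup>2"] by (intro mult_left_mono) auto
  finally have "K * exp (- ((c0 * L)\<^sup>2 / 4)) \<le> (K * exp (- (c0\<^sup>2 / 8 * L\<^sup>2))) * exp (- C * L\<^sup>2)"
    using assms(3) by (simp add: mult_left_mono mult.assoc)
  also have "\<dots> \<le> 1 / 2 * exp (- C * L\<^sup>2)"
    using assms(1) by (intro mult_right_mono) auto
  finally show ?thesis by simp
qed

locale score_null_model =
  fixes P :: "'a::euclidean_space measure" and s :: "'a \<Rightarrow> real"
  assumes valid: "valid_setting P s"
begin

sublocale prob_space P
  using valid by (simp add: valid_setting_def)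

lemma sets_P [measurable_cong]: "sets P = sets borel"
  using valid by (simp add: valid_setting_def)

lemma measurable_score [measurable]: "s \<in> borel_measurable P"
  using valid by (simp add: valid_setting_def)

text \<open>Declared measurable only for the fixed law P: with a variable target measure the rule
  matches every function application and sends the measurability prover into a loop.\<close>

lemmas measurable_sample_component [measurable] = measurable_iid_sample_component[where M = P]

definition score_law :: "real measure" where
  "score_law = distr P borel s"

definition pit :: "'a \<Rightarrow> real" where
  "pit x = cdf score_law (s x)"

lemma real_distribution_score_law: "real_distribution score_law"
  unfolding score_law_def by simp

lemma isCont_cdf_score_law: "isCont (cdf score_law) t"
proof -
  interpret F: real_distribution score_law by (rule real_distribution_score_law)
  have "measure score_law {t} = measure P (s -` {t} \<inter> space P)"
    by (simp add: score_law_def measure_distr)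
  then show ?thesis
    using valid by (simp add: valid_setting_def F.isCont_cdf)
qed

lemma measurable_pit [measurable]: "pit \<in> borel_measurable P"
proof -
  interpret F: real_distribution score_law by (rule real_distribution_score_law)
  have [measurable]: "cdf score_law \<in> borel_measurable borel"
    by (rule borel_measurable_mono) (simp add: mono_def F.cdf_nondecreasing)
  show ?thesis unfolding pit_def[abs_def] by measurable
qed

lemma pit_bounds: "0 \<le> pit x" "pit x \<le> 1"
proof -
  interpret F: real_distribution score_law by (rule real_distribution_score_law)
  show "0 \<le> pit x" "pit x \<le> 1"
    using F.cdf_nonneg F.cdf_bounded_prob by (auto simp: pit_def)
qed

lemma prob_pit_le:
  assumes "0 \<le> v" "v \<le> 1"
  shows "prob {x \<in> space P. pit x \<le> v} = v"
proof -
  interpret F: real_distribution score_law by (rule real_distribution_score_law)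
  have "{x \<in> space P. pit x \<le> v} = s -` {t. cdf score_law t \<le> v} \<inter> space P"
    by (auto simp: pit_def)
  then show ?thesis
    using F.prob_cdf_le[OF isCont_cdf_score_law assms] F.cdf_sublevel_sets(1)[of v]
    by (simp add: score_law_def measure_distr)
qed

lemma prob_pit_less:
  assumes "0 \<le> v" "v \<le> 1"
  shows "prob {x \<in> space P. pit x < v} = v"
proof -
  interpret F: real_distribution score_law by (rule real_distribution_score_law)
  have "{x \<in> space P. pit x < v} = s -` {t. cdf score_law t < v} \<inter> space P"
    by (auto simp: pit_def)
  then show ?thesis
    using F.prob_cdf_less[OF isCont_cdf_score_law assms] F.cdf_sublevel_sets(2)[of v]
    by (simp add: score_law_def measure_distr)
qed

lemma pit_uniform: "distributed P lborel pit (\<lambda>x. ennreal (indicator {0..1} x))"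
  using uniform_distrI_borel_atLeastAtMost[OF measurable_pit, of 0 1] prob_pit_le by simp

lemma AE_pit_pos: "AE x in P. 0 < pit x"
  using prob_pit_le[of 0]
  by (intro AE_I[where N = "{x \<in> space P. pit x \<le> 0}"]) (auto simp: emeasure_eq_measure)

lemma neg_log_pit_exponential:
  "distributed P lborel (\<lambda>x. - 2 * ln (pit x)) (exponential_density (1 / 2))"
proof (rule exponential_distributedI)
  fix a :: real
  assume a: "0 \<le> a"
  define w where "w = exp (- a / 2)"
  have w: "0 < w" "w \<le> 1" using a by (auto simp: w_def)
  have "- 2 * ln (pit x) \<le> a \<longleftrightarrow> pit x \<le> 0 \<or> w \<le> pit x" for x
  proof (cases "pit x \<le> 0")
    case False
    then have "- 2 * ln (pit x) \<le> a \<longleftrightarrow> ln w \<le> ln (pit x)"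
      by (auto simp: w_def)
    then show ?thesis using False w by simp
  qed (use pit_bounds[of x] a in auto)
  then have eq: "{x \<in> space P. - 2 * ln (pit x) \<le> a}
      = {x \<in> space P. pit x \<le> 0} \<union> (space P - {x \<in> space P. pit x < w})"
    by (simp add: set_eq_iff not_less) blast
  have "prob {x \<in> space P. - 2 * ln (pit x) \<le> a}
      = prob {x \<in> space P. pit x \<le> 0} + prob (space P - {x \<in> space P. pit x < w})"
    unfolding eq using w by (intro finite_measure_Union) auto
  also have "\<dots> = 1 - exp (- a * (1 / 2))"
    using prob_pit_le[of 0] prob_pit_less[of w] w by (simp add: prob_compl w_def)
  finally show "emeasure P {x \<in> space P. - 2 * ln (pit x) \<le> a} = 1 - ennreal (exp (- a * (1 / 2)))"
    using ennreal_minus[of "exp (- (a / 2))" 1] by (simp add: emeasure_eq_measure)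
qed auto

lemma nn_integral_pit:
  assumes [measurable]: "g \<in> borel_measurable borel"
  shows "(\<integral>\<^sup>+x. ennreal (g (pit x)) \<partial>P) = (\<integral>\<^sup>+v. ennreal (g v) * indicator {0..1} v \<partial>lborel)"
proof -
  have "(\<integral>\<^sup>+x. ennreal (g (pit x)) \<partial>P) = (\<integral>\<^sup>+v. ennreal (indicator {0..1} v) * ennreal (g v) \<partial>lborel)"
    by (rule distributed_nn_integral[OF pit_uniform, symmetric]) measurable
  also have "\<dots> = (\<integral>\<^sup>+v. ennreal (g v) * indicator {0..1} v \<partial>lborel)"
    by (intro nn_integral_cong) (auto simp: indicator_def)
  finally show ?thesis .
qed

lemma nn_integral_neg_log_pit_power:
  "(\<integral>\<^sup>+x. ennreal ((- 2 * ln (pit x)) ^ i) \<partial>P) = ennreal (fact i * 2 ^ i)"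
proof -
  have "(\<integral>\<^sup>+x. ennreal ((- 2 * ln (pit x)) ^ i) \<partial>P)
      = (\<integral>\<^sup>+y. ennreal (exponential_density (1 / 2) y) * ennreal (y ^ i) \<partial>lborel)"
    by (rule distributed_nn_integral[OF neg_log_pit_exponential, symmetric]) measurable
  also have "\<dots> = (\<integral>\<^sup>+y. ennreal (erlang_density 0 (1 / 2) y * y ^ i) \<partial>lborel)"
    by (intro nn_integral_cong) (auto simp: erlang_density_def not_less ennreal_mult[symmetric])
  also have "\<dots> = ennreal (fact i * 2 ^ i)"
    using nn_integral_erlang_ith_moment[of "1 / 2" 0 i]
    by (simp add: ennreal_of_nat_eq_real_of_nat power_one_over)
  finally show ?thesis .
qed


definition count_pit_le :: "nat \<Rightarrow> (nat \<Rightarrow> 'a) \<Rightarrow> real \<Rightarrow> real" where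
  "count_pit_le n \<omega> v = (\<Sum>j<n. indicator {x \<in> space P. pit x \<le> v} (\<omega> j))"

definition count_pit_less :: "nat \<Rightarrow> (nat \<Rightarrow> 'a) \<Rightarrow> real \<Rightarrow> real" where
  "count_pit_less n \<omega> v = (\<Sum>j<n. indicator {x \<in> space P. pit x < v} (\<omega> j))"

text \<open>Outside this event the calibration counts are within c sqrt k + c^2 of k at every grid point
  k/n; by monotonicity this controls all conformal ranks simultaneously.\<close>

definition rank_deviation_event :: "nat \<Rightarrow> nat \<Rightarrow> real \<Rightarrow> (nat \<Rightarrow> 'a) set" where
  "rank_deviation_event n N c = (\<Union>k::nat\<le>n.
     {\<omega> \<in> space (iid_sample P N). c * sqrt k + c\<^sup>2 \<le> count_pit_le n \<omega> (k / n) - k} \<union>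
     {\<omega> \<in> space (iid_sample P N). c * sqrt k + c\<^sup>2 \<le> k - count_pit_less n \<omega> (k / n)})"

definition calibration_rank :: "nat \<Rightarrow> (nat \<Rightarrow> 'a) \<Rightarrow> 'a \<Rightarrow> real" where
  "calibration_rank n \<omega> x = real (card {j. j < n \<and> s (\<omega> j) \<le> s x})"

lemma borel_measurable_count_pit [measurable]:
  assumes "n \<le> N"
  shows "(\<lambda>\<omega>. count_pit_le n \<omega> v) \<in> borel_measurable (iid_sample P N)"
    and "(\<lambda>\<omega>. count_pit_less n \<omega> v) \<in> borel_measurable (iid_sample P N)"
proof -
  have J: "{..<n} \<subseteq> {..<N}" using assms by auto
  show "(\<lambda>\<omega>. count_pit_le n \<omega> v) \<in> borel_measurable (iid_sample P N)"
    unfolding count_pit_le_def by (rule borel_measurable_iid_sample_sum[OF J]) measurable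
  show "(\<lambda>\<omega>. count_pit_less n \<omega> v) \<in> borel_measurable (iid_sample P N)"
    unfolding count_pit_less_def by (rule borel_measurable_iid_sample_sum[OF J]) measurable
qed

lemma sets_rank_deviation_event: "n \<le> N \<Longrightarrow> rank_deviation_event n N c \<in> sets (iid_sample P N)"
  unfolding rank_deviation_event_def by measurable

lemma prob_rank_deviation_event_le:
  assumes n: "0 < n" "n \<le> N" and c: "0 \<le> c"
  shows "measure (iid_sample P N) (rank_deviation_event n N c) \<le> 2 * (real n + 1) * exp (- (c\<^sup>2 / 4))"
proof -
  interpret S: prob_space "iid_sample P N" by (rule prob_space_iid_sample)
  define A where "A k = {\<omega> \<in> space (iid_sample P N). c * sqrt k + c\<^sup>2 \<le> count_pit_le n \<omega> (k / n) - k}"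
    for k :: nat
  define B where "B k = {\<omega> \<in> space (iid_sample P N). c * sqrt k + c\<^sup>2 \<le> k - count_pit_less n \<omega> (k / n)}"
    for k :: nat
  have AB: "A k \<in> sets (iid_sample P N)" "B k \<in> sets (iid_sample P N)" for k
    unfolding A_def B_def
    by (intro borel_measurable_le borel_measurable_const borel_measurable_diff
        borel_measurable_count_pit n(2))+
  have J: "{..<n} \<subseteq> {..<N}" using n by auto
  have tail: "measure (iid_sample P N) {\<omega> \<in> space (iid_sample P N).
      c * sqrt k + c\<^sup>2 \<le> \<sigma> * ((\<Sum>j<n. indicator E (\<omega> j)) - real k)} \<le> exp (- (c\<^sup>2 / 4))"
    if "E \<in> events" "prob E = k / n" "\<bar>\<sigma>\<bar> = 1" for E and \<sigma> :: real and k :: nat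
    using iid_sample_count_deviation[OF that(1) J c that(3)] that(2) n by simp
  have AB_le: "measure (iid_sample P N) (A k \<union> B k) \<le> 2 * exp (- (c\<^sup>2 / 4))" if "k \<le> n" for k
  proof -
    have "measure (iid_sample P N) (A k) \<le> exp (- (c\<^sup>2 / 4))"
      using tail[of "{x \<in> space P. pit x \<le> k / n}" k 1] prob_pit_le[of "k / n"] that n
      by (simp add: A_def count_pit_le_def)
    moreover have "measure (iid_sample P N) (B k) \<le> exp (- (c\<^sup>2 / 4))"
      using tail[of "{x \<in> space P. pit x < k / n}" k "-1"] prob_pit_less[of "k / n"] that n
      by (simp add: B_def count_pit_less_def)
    ultimately show ?thesis
      using measure_Un_le[OF AB(1)[of k] AB(2)[of k]] by linarith
  qed
  have "rank_deviation_event n N c = (\<Union>k\<le>n. A k \<union> B k)"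
    by (simp add: rank_deviation_event_def A_def B_def)
  then have "measure (iid_sample P N) (rank_deviation_event n N c) \<le> (\<Sum>k\<le>n. measure (iid_sample P N) (A k \<union> B k))"
    using AB by (simp add: S.finite_measure_subadditive_finite image_subset_iff)
  also have "\<dots> \<le> (\<Sum>k\<le>n. 2 * exp (- (c\<^sup>2 / 4)))"
    using AB_le by (intro sum_mono) simp
  finally show ?thesis by (simp add: algebra_simps)
qed

lemma u_marg_eq_calibration_rank: "u_marg n s \<omega> x = (1 + calibration_rank n \<omega> x) / (real n + 1)"
  by (simp add: u_marg_def calibration_rank_def)

lemma count_pit_le_mono: "v \<le> v' \<Longrightarrow> count_pit_le n \<omega> v \<le> count_pit_le n \<omega> v'"
  unfolding count_pit_le_def by (rule sum_mono) (auto simp: indicator_def)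

lemma count_pit_less_mono: "v \<le> v' \<Longrightarrow> count_pit_less n \<omega> v \<le> count_pit_less n \<omega> v'"
  unfolding count_pit_less_def by (rule sum_mono) (auto simp: indicator_def)

lemma calibration_rank_between_counts:
  assumes "\<omega> \<in> space (iid_sample P N)" "n \<le> N"
  shows "count_pit_less n \<omega> (pit x) \<le> calibration_rank n \<omega> x"
    and "calibration_rank n \<omega> x \<le> count_pit_le n \<omega> (pit x)"
proof -
  interpret F: real_distribution score_law by (rule real_distribution_score_law)
  have pit_mono: "s y \<le> s x \<Longrightarrow> pit y \<le> pit x" for y
    by (simp add: pit_def F.cdf_nondecreasing)
  have "pit (\<omega> j) < pit x \<Longrightarrow> s (\<omega> j) \<le> s x" for j
    using F.cdf_nondecreasing[of "s x" "s (\<omega> j)"] by (cases "s (\<omega> j) \<le> s x") (auto simp: pit_def)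
  then show "count_pit_less n \<omega> (pit x) \<le> calibration_rank n \<omega> x"
    by (auto simp: count_pit_less_def calibration_rank_def sum_indicator_eq_card intro!: card_mono)
  have "j < n \<Longrightarrow> \<omega> j \<in> space P" for j
    using assms space_iid_sample_component by fastforce
  then show "calibration_rank n \<omega> x \<le> count_pit_le n \<omega> (pit x)"
    using pit_mono by (auto simp: count_pit_le_def calibration_rank_def sum_indicator_eq_card intro!: card_mono)
qed

lemma abs_calibration_rank_deviation_le:
  assumes n: "0 < n" "n \<le> N" and c: "0 \<le> c"
    and \<omega>: "\<omega> \<in> space (iid_sample P N) - rank_deviation_event n N c"
  shows "\<bar>calibration_rank n \<omega> x - n * pit x\<bar> \<le> c * sqrt (n * pit x) + c\<^sup>2 + c + 1"
proof -
  define v where "v = pit x"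
  have v: "0 \<le> v" "v \<le> 1" using pit_bounds by (auto simp: v_def)
  have nv: "0 \<le> n * v" "n * v \<le> n" using v by (auto simp: mult_left_le)
  have dev: "count_pit_le n \<omega> (k / n) - k < c * sqrt k + c\<^sup>2"
    "k - count_pit_less n \<omega> (k / n) < c * sqrt k + c\<^sup>2" if "k \<le> n" for k
    using \<omega> that unfolding rank_deviation_event_def by (auto simp: not_le)
  note between = calibration_rank_between_counts[OF _ n(2), of \<omega> x]
  define k where "k = nat \<lfloor>n * v\<rfloor>"
  have k: "k \<le> n" "real k \<le> n * v" "n * v < real k + 1"
    using nv by (auto simp: k_def nat_le_iff floor_le_iff)
  have "count_pit_less n \<omega> (k / n) \<le> count_pit_less n \<omega> v"
    using k n by (intro count_pit_less_mono) (simp add: field_simps)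
  moreover have "c * sqrt k \<le> c * sqrt (n * v)"
    using k c by (intro mult_left_mono) auto
  ultimately have lower: "n * v - calibration_rank n \<omega> x \<le> c * sqrt (n * v) + c\<^sup>2 + 1"
    using dev(2)[OF k(1)] between(1) \<omega> k by (simp add: v_def)
  define k' where "k' = nat \<lceil>n * v\<rceil>"
  have k': "k' \<le> n" "n * v \<le> real k'" "real k' < n * v + 1"
    using nv by (auto simp: k'_def nat_le_iff ceiling_le_iff ceiling_less_cancel)
  have "sqrt k' \<le> sqrt (n * v + 1)"
    using k' by simp
  also have "\<dots> \<le> sqrt (n * v) + 1"
    using sqrt_add_le_add_sqrt[of "n * v" 1] nv by simp
  finally have "c * sqrt k' \<le> c * sqrt (n * v) + c"
    using c mult_left_mono by (fastforce simp: distrib_left)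
  moreover have "count_pit_le n \<omega> v \<le> count_pit_le n \<omega> (k' / n)"
    using k' n by (intro count_pit_le_mono) (simp add: field_simps)
  ultimately have upper: "calibration_rank n \<omega> x - n * v \<le> c * sqrt (n * v) + c\<^sup>2 + c + 1"
    using dev(1)[OF k'(1)] between(2) \<omega> k' by (simp add: v_def)
  show ?thesis
    using lower upper c v by (simp add: v_def abs_le_iff)
qed

lemma fisher_stat_bounds:
  assumes n: "0 < n" and c: "0 \<le> c" and e: "0 < dkwm_margin n \<delta>" "dkwm_margin n \<delta> < 1"
    and ce: "(3 * c\<^sup>2 + 2 * c + 4) / n \<le> dkwm_margin n \<delta>"
    and \<omega>: "\<omega> \<in> space (iid_sample P (n + m)) - rank_deviation_event n (n + m) c"
  shows "fisher_stat n m \<delta> s \<omega> \<le> (\<Sum>i<m. fisher_term_bound n c (dkwm_margin n \<delta>) (pit (\<omega> (n + i))))"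
    and "(\<forall>i<m. 0 < pit (\<omega> (n + i))) \<Longrightarrow>
      \<bar>fisher_stat n m \<delta> s \<omega> - (\<Sum>i<m. - 2 * ln (pit (\<omega> (n + i))))\<bar>
        \<le> (\<Sum>i<m. fisher_term_error n c (dkwm_margin n \<delta>) (pit (\<omega> (n + i))))"
proof -
  note bound = neg_ln_dkwm_pvalue_bounds[OF n pit_bounds e c ce
      abs_calibration_rank_deviation_le[OF n _ c \<omega>], unfolded u_marg_eq_calibration_rank[symmetric] h_dkwm_eq[symmetric]]
  show "fisher_stat n m \<delta> s \<omega> \<le> (\<Sum>i<m. fisher_term_bound n c (dkwm_margin n \<delta>) (pit (\<omega> (n + i))))"
    unfolding fisher_stat_def by (intro sum_mono bound(1)) simp
  assume pos: "\<forall>i<m. 0 < pit (\<omega> (n + i))"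
  have "\<bar>fisher_stat n m \<delta> s \<omega> - (\<Sum>i<m. - 2 * ln (pit (\<omega> (n + i))))\<bar>
      \<le> (\<Sum>i<m. \<bar>- 2 * ln (h_dkwm n \<delta> (u_marg n s \<omega> (\<omega> (n + i)))) - (- 2 * ln (pit (\<omega> (n + i))))\<bar>)"
    unfolding fisher_stat_def sum_subtractf[symmetric] by (rule sum_abs)
  also have "\<dots> \<le> (\<Sum>i<m. fisher_term_error n c (dkwm_margin n \<delta>) (pit (\<omega> (n + i))))"
    using pos by (intro sum_mono bound(2)) auto
  finally show "\<bar>fisher_stat n m \<delta> s \<omega> - (\<Sum>i<m. - 2 * ln (pit (\<omega> (n + i))))\<bar>
      \<le> (\<Sum>i<m. fisher_term_error n c (dkwm_margin n \<delta>) (pit (\<omega> (n + i))))" .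
qed

lemma borel_measurable_fisher_stat [measurable]:
  "(\<lambda>\<omega>. fisher_stat n m \<delta> s \<omega>) \<in> borel_measurable (iid_sample P (n + m))"
  unfolding fisher_stat_def
proof (rule borel_measurable_sum)
  fix i assume "i \<in> {..<m}"
  then have [simp]: "i < m" "n + i < n + m" by simp_all
  have "calibration_rank n \<omega> x = (\<Sum>j<n. if s (\<omega> j) \<le> s x then 1 else 0)" for \<omega> x
    by (simp add: calibration_rank_def sum.If_cases Int_def)
  moreover have "(\<lambda>\<omega>. \<Sum>j<n. if s (\<omega> j) \<le> s (\<omega> (n + i)) then 1 else 0 :: real) \<in> borel_measurable (iid_sample P (n + m))"
  proof (rule borel_measurable_sum)
    fix j assume "j \<in> {..<n}"
    then have [simp]: "j < n + m" by simp
    show "(\<lambda>\<omega>. if s (\<omega> j) \<le> s (\<omega> (n + i)) then 1 else 0 :: real) \<in> borel_measurable (iid_sample P (n + m))"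
      by measurable
  qed
  ultimately have [measurable]: "(\<lambda>\<omega>. calibration_rank n \<omega> (\<omega> (n + i))) \<in> borel_measurable (iid_sample P (n + m))"
    by simp
  show "(\<lambda>\<omega>. - 2 * ln (h_dkwm n \<delta> (u_marg n s \<omega> (\<omega> (n + i))))) \<in> borel_measurable (iid_sample P (n + m))"
    unfolding u_marg_eq_calibration_rank h_dkwm_def by measurable
qed


lemma nn_integral_fisher_term_bound_le:
  assumes e: "0 < e" "e < 1" and n: "0 < n" and c: "0 \<le> c"
  shows "(\<integral>\<^sup>+x. ennreal (fisher_term_bound n c e (pit x)) \<partial>P) \<le> ennreal (fisher_term_bound_mean n c e)"
proof -
  have parts: "0 \<le> - 2 * ln (min (v + e) 1)" "0 \<le> 4 * rank_error n c v / (v + e)" if "0 \<le> v" for v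
    using that e c by (auto simp: rank_error_nonneg)
  have bound_split: "ennreal (fisher_term_bound n c e v)
      = ennreal (- 2 * ln (min (v + e) 1)) + ennreal (4 * rank_error n c v / (v + e))" if "0 \<le> v" for v
    unfolding fisher_term_bound_def by (rule ennreal_plus[OF parts[OF that]])
  have "(\<integral>\<^sup>+x. ennreal (fisher_term_bound n c e (pit x)) \<partial>P)
      = (\<integral>\<^sup>+v. ennreal (- 2 * ln (min (v + e) 1)) * indicator {0..1} v
          + ennreal (4 * rank_error n c v / (v + e)) * indicator {0..1} v \<partial>lborel)"
    unfolding nn_integral_pit[OF borel_measurable_fisher_term(2)]
    by (intro nn_integral_cong) (auto simp: indicator_def bound_split distrib_right)
  also have "\<dots> = (\<integral>\<^sup>+v. ennreal (- 2 * ln (min (v + e) 1)) * indicator {0..1} v \<partial>lborel)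
      + (\<integral>\<^sup>+v. ennreal (4 * rank_error n c v / (v + e)) * indicator {0..1} v \<partial>lborel)"
    by (rule nn_integral_add) measurable
  also have "\<dots> \<le> ennreal (2 - 2 * e + 2 * e * ln e) + ennreal (rank_error_mean n c e)"
    using nn_integral_neg_ln_min_add[OF e] nn_integral_rank_error_le[OF e n c] by (intro add_mono) auto
  also have "\<dots> = ennreal (fisher_term_bound_mean n c e)"
    using one_sub_add_mult_ln_nonneg[OF e(1)] rank_error_mean_nonneg[OF e(1) c]
    by (simp add: fisher_term_bound_mean_def ennreal_plus[symmetric] del: ennreal_plus)
  finally show ?thesis .
qed

lemma nn_integral_fisher_term_bound_sq_le:
  assumes e: "0 < e" "e < 1" and n: "0 < n" and c: "0 \<le> c" and ce: "(3 * c\<^sup>2 + 2 * c + 4) / n \<le> e"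
  shows "(\<integral>\<^sup>+x. ennreal ((fisher_term_bound n c e (pit x))\<^sup>2) \<partial>P) \<le> 24"
proof -
  have "(\<integral>\<^sup>+x. ennreal ((fisher_term_bound n c e (pit x))\<^sup>2) \<partial>P)
      \<le> (\<integral>\<^sup>+x. ennreal 2 * ennreal ((- 2 * ln (pit x))\<^sup>2) + ennreal 8 \<partial>P)"
  proof (rule nn_integral_mono_AE)
    show "AE x in P. ennreal ((fisher_term_bound n c e (pit x))\<^sup>2)
        \<le> ennreal 2 * ennreal ((- 2 * ln (pit x))\<^sup>2) + ennreal 8"
      using AE_pit_pos
    proof eventually_elim
      case (elim x)
      then have "(fisher_term_bound n c e (pit x))\<^sup>2 \<le> 2 * (- 2 * ln (pit x))\<^sup>2 + 8"
        using pit_bounds by (intro fisher_term_bound_between(3)[OF _ _ e n c ce])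
      then have "ennreal ((fisher_term_bound n c e (pit x))\<^sup>2) \<le> ennreal (2 * (- 2 * ln (pit x))\<^sup>2 + 8)"
        by (rule ennreal_leI)
      also have "\<dots> = ennreal 2 * ennreal ((- 2 * ln (pit x))\<^sup>2) + ennreal 8"
        by (simp add: ennreal_plus ennreal_mult)
      finally show ?case .
    qed
  qed
  also have "\<dots> = ennreal 2 * (\<integral>\<^sup>+x. ennreal ((- 2 * ln (pit x))\<^sup>2) \<partial>P) + ennreal 8"
    by (simp add: nn_integral_add nn_integral_cmult emeasure_space_1)
  also have "\<dots> = 24"
    using nn_integral_neg_log_pit_power[of 2]
    by (simp add: ennreal_mult[symmetric] ennreal_plus[symmetric] del: ennreal_plus)
  finally show ?thesis .
qed

lemma nn_integral_log_gap_dkwm: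
  assumes e: "0 < e" "e < 1"
  shows "(\<integral>\<^sup>+x. ennreal (2 * (ln (min (pit x + e) 1) - ln (pit x))) \<partial>P) = ennreal (2 * e - 2 * e * ln e)"
proof -
  define A L where "A x = - 2 * ln (min (pit x + e) 1)" and "L x = - 2 * ln (pit x)" for x
  have [measurable]: "A \<in> borel_measurable P" "L \<in> borel_measurable P"
    unfolding A_def[abs_def] L_def[abs_def] by measurable
  have AE: "AE x in P. 0 \<le> A x \<and> A x \<le> L x"
    using AE_pit_pos
  proof eventually_elim
    case (elim x)
    then show ?case
      using pit_bounds[of x] e by (auto simp: A_def L_def)
  qed
  have "(\<integral>\<^sup>+x. ennreal (L x) \<partial>P) = (\<integral>\<^sup>+x. ennreal (A x) + ennreal (L x - A x) \<partial>P)"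
    by (intro nn_integral_cong_AE, use AE in eventually_elim)
      (auto simp: ennreal_plus[symmetric] simp del: ennreal_plus)
  also have "\<dots> = (\<integral>\<^sup>+x. ennreal (A x) \<partial>P) + (\<integral>\<^sup>+x. ennreal (L x - A x) \<partial>P)"
    by (rule nn_integral_add) measurable
  finally have "ennreal 2 = ennreal (2 - 2 * e + 2 * e * ln e) + (\<integral>\<^sup>+x. ennreal (L x - A x) \<partial>P)"
    using nn_integral_neg_log_pit_power[of 1] nn_integral_pit[of "\<lambda>v. - 2 * ln (min (v + e) 1)"]
      nn_integral_neg_ln_min_add[OF e]
    by (simp add: A_def L_def)
  then have "(\<integral>\<^sup>+x. ennreal (L x - A x) \<partial>P) = ennreal 2 - ennreal (2 - 2 * e + 2 * e * ln e)"
    by (metis ennreal_add_diff_cancel_left ennreal_neq_top)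
  also have "\<dots> = ennreal (2 * e - 2 * e * ln e)"
    using ennreal_minus[OF one_sub_add_mult_ln_nonneg[OF e(1), THEN mult_left_mono[of 0 _ 2], simplified], of 2]
    by (simp add: algebra_simps)
  finally show ?thesis
    by (simp add: A_def L_def algebra_simps)
qed

lemma nn_integral_fisher_term_error_le:
  assumes e: "0 < e" "e < 1" and n: "0 < n" and c: "0 \<le> c"
  shows "(\<integral>\<^sup>+x. ennreal (fisher_term_error n c e (pit x)) \<partial>P) \<le> ennreal (fisher_term_error_mean n c e)"
proof -
  define G D where "G x = 2 * (ln (min (pit x + e) 1) - ln (pit x))"
    and "D x = 4 * rank_error n c (pit x) / (pit x + e)" for x
  have [measurable]: "G \<in> borel_measurable P" "D \<in> borel_measurable P"
    unfolding G_def[abs_def] D_def[abs_def] by measurable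
  have AE: "AE x in P. 0 \<le> G x \<and> 0 \<le> D x \<and> fisher_term_error n c e (pit x) = G x + D x"
    using AE_pit_pos
  proof eventually_elim
    case (elim x)
    then show ?case
      using pit_bounds[of x] e c by (auto simp: G_def D_def fisher_term_error_def rank_error_nonneg)
  qed
  have "(\<integral>\<^sup>+x. ennreal (fisher_term_error n c e (pit x)) \<partial>P) = (\<integral>\<^sup>+x. ennreal (G x) + ennreal (D x) \<partial>P)"
    by (intro nn_integral_cong_AE, use AE in eventually_elim)
      (auto simp: ennreal_plus[symmetric] simp del: ennreal_plus)
  also have "\<dots> = (\<integral>\<^sup>+x. ennreal (G x) \<partial>P) + (\<integral>\<^sup>+x. ennreal (D x) \<partial>P)"
    by (rule nn_integral_add) measurable
  also have "\<dots> \<le> ennreal (2 * e - 2 * e * ln e) + ennreal (rank_error_mean n c e)"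
    using nn_integral_log_gap_dkwm[OF e] nn_integral_pit[of "\<lambda>v. 4 * rank_error n c v / (v + e)"]
      nn_integral_rank_error_le[OF e n c]
    by (intro add_mono) (simp_all add: G_def D_def)
  also have "\<dots> = ennreal (fisher_term_error_mean n c e)"
  proof -
    have "e * ln e \<le> 0"
      using e by (intro mult_nonneg_nonpos) auto
    then have "0 \<le> 2 * e - 2 * e * ln e"
      using e by linarith
    then show ?thesis
      using ennreal_plus[OF _ rank_error_mean_nonneg[OF e(1) c, of n]]
      by (simp add: fisher_term_error_mean_def)
  qed
  finally show ?thesis .
qed

lemma nn_integral_exp_fisher_term_bound_le:
  assumes n: "0 < n" and c: "0 \<le> c" and e: "0 < e" "e < 1"
    and ce: "(3 * c\<^sup>2 + 2 * c + 4) / n \<le> e" and l: "0 \<le> l" and lB: "l * (- 2 * ln e + 2) \<le> 1"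
  shows "(\<integral>\<^sup>+x. ennreal (exp (l * fisher_term_bound n c e (pit x))) \<partial>P)
    \<le> ennreal (1 + l * fisher_term_bound_mean n c e + 24 * l\<^sup>2)"
proof -
  define Y where "Y x = fisher_term_bound n c e (pit x)" for x
  have [measurable]: "Y \<in> borel_measurable P" unfolding Y_def[abs_def] by measurable
  have "(\<integral>\<^sup>+x. ennreal (exp (l * Y x)) \<partial>P)
      \<le> (\<integral>\<^sup>+x. 1 + ennreal l * ennreal (Y x) + ennreal (l\<^sup>2) * ennreal ((Y x)\<^sup>2) \<partial>P)"
  proof (intro nn_integral_mono)
    fix x
    have Y: "0 \<le> Y x" "Y x \<le> - 2 * ln e + 2"
      using fisher_term_bound_between(1,2)[OF pit_bounds e n c ce] by (simp_all add: Y_def)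
    then have "l * Y x \<le> 1"
      using lB l mult_left_mono[OF Y(2) l] by linarith
    then have "exp (l * Y x) \<le> 1 + l * Y x + l\<^sup>2 * (Y x)\<^sup>2"
      using exp_le_quadratic[of "l * Y x"] by (simp add: power_mult_distrib)
    then have "ennreal (exp (l * Y x)) \<le> ennreal (1 + l * Y x + l\<^sup>2 * (Y x)\<^sup>2)"
      by (rule ennreal_leI)
    also have "\<dots> = 1 + ennreal l * ennreal (Y x) + ennreal (l\<^sup>2) * ennreal ((Y x)\<^sup>2)"
      using l Y by (simp add: ennreal_plus ennreal_mult)
    finally show "ennreal (exp (l * Y x)) \<le> 1 + ennreal l * ennreal (Y x) + ennreal (l\<^sup>2) * ennreal ((Y x)\<^sup>2)" .
  qed
  also have "\<dots> = 1 + ennreal l * (\<integral>\<^sup>+x. ennreal (Y x) \<partial>P) + ennreal (l\<^sup>2) * (\<integral>\<^sup>+x. ennreal ((Y x)\<^sup>2) \<partial>P)"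
    by (simp add: nn_integral_add nn_integral_cmult emeasure_space_1)
  also have "\<dots> \<le> 1 + ennreal l * ennreal (fisher_term_bound_mean n c e) + ennreal (l\<^sup>2) * 24"
    using nn_integral_fisher_term_bound_le[OF e n c] nn_integral_fisher_term_bound_sq_le[OF e n c ce]
    unfolding Y_def by (intro add_mono mult_left_mono) auto
  also have "\<dots> = ennreal (1 + l * fisher_term_bound_mean n c e + 24 * l\<^sup>2)"
    using l fisher_term_means_nonneg(1)[OF e c, of n]
    by (simp add: ennreal_plus ennreal_mult mult.commute)
  finally show ?thesis by (simp add: Y_def)
qed


lemma reject_prob_eq:
  "reject_prob P s n m \<delta> \<alpha> = measure (iid_sample P (n + m))
     {\<omega> \<in> space (iid_sample P (n + m)). chi2_quantile (2 * m) (1 - \<alpha>) \<le> fisher_stat n m \<delta> s \<omega>}"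
  by (simp add: reject_prob_def iid_sample_def)

lemma borel_measurable_test_sum:
  fixes g :: "'a \<Rightarrow> real"
  assumes "g \<in> borel_measurable P"
  shows "(\<lambda>\<omega>. \<Sum>i<m. g (\<omega> (n + i))) \<in> borel_measurable (iid_sample P (n + m))"
  using borel_measurable_iid_sample_sum[OF test_block(1) assms] by (simp add: sum_test_block)

definition oracle_fisher_stat :: "nat \<Rightarrow> nat \<Rightarrow> (nat \<Rightarrow> 'a) \<Rightarrow> real" where
  "oracle_fisher_stat n m \<omega> = (\<Sum>i<m. - 2 * ln (pit (\<omega> (n + i))))"

lemma borel_measurable_oracle_fisher_stat [measurable]:
  "oracle_fisher_stat n m \<in> borel_measurable (iid_sample P (n + m))"
  unfolding oracle_fisher_stat_def[abs_def] by (rule borel_measurable_test_sum) measurable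

lemma distr_oracle_fisher_stat:
  assumes m: "0 < m"
  shows "distr (iid_sample P (n + m)) lborel (oracle_fisher_stat n m) = chi2_measure (2 * m)"
proof -
  interpret S: prob_space "iid_sample P (n + m)" by (rule prob_space_iid_sample)
  define J where "J = (\<lambda>i. n + i) ` {..<m}"
  have J: "J \<subseteq> {..<n + m}" "finite J" "J \<noteq> {}" "card J = m"
    using test_block m by (auto simp: J_def)
  have "S.indep_vars (\<lambda>_. borel) (\<lambda>j \<omega>. - 2 * ln (pit (\<omega> j))) J"
    using S.indep_vars_compose2[OF S.indep_vars_subset[OF indep_vars_iid_sample J(1)],
        of "\<lambda>_ x. - 2 * ln (pit x)" "\<lambda>_. borel"] m
    by simp
  moreover have "distributed (iid_sample P (n + m)) lborel (\<lambda>\<omega>. - 2 * ln (pit (\<omega> j))) (exponential_density (1 / 2))"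
    if "j \<in> J" for j
    using J(1) that by (intro distributed_iid_sample_component[OF _ neg_log_pit_exponential]) auto
  ultimately have "distributed (iid_sample P (n + m)) lborel (\<lambda>\<omega>. \<Sum>j\<in>J. - 2 * ln (pit (\<omega> j)))
      (erlang_density (m - 1) (1 / 2))"
    using S.exponential_distributed_sum[OF J(2,3), of "1 / 2"] J(4) by simp
  then show ?thesis
    using chi2_measure_even[OF m]
    by (simp add: distributed_def erlang_measure_def J_def sum_test_block oracle_fisher_stat_def[abs_def])
qed

lemma prob_oracle_fisher_stat:
  assumes "0 < m" "A \<in> sets borel"
  shows "measure (iid_sample P (n + m)) {\<omega> \<in> space (iid_sample P (n + m)). oracle_fisher_stat n m \<omega> \<in> A}
    = measure (chi2_measure (2 * m)) A"
  using measure_distr[of "oracle_fisher_stat n m" "iid_sample P (n + m)" lborel A]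
    distr_oracle_fisher_stat[OF assms(1), of n] assms(2)
  by (simp add: vimage_def Int_def conj_commute)

lemma sets_test_pit_nonpos:
  "i < m \<Longrightarrow> {\<omega> \<in> space (iid_sample P (n + m)). pit (\<omega> (n + i)) \<le> 0} \<in> sets (iid_sample P (n + m))"
  "{\<omega> \<in> space (iid_sample P (n + m)). \<exists>i<m. pit (\<omega> (n + i)) \<le> 0} \<in> sets (iid_sample P (n + m))"
proof -
  have component: "{\<omega> \<in> space (iid_sample P (n + m)). pit (\<omega> (n + i)) \<le> 0} \<in> sets (iid_sample P (n + m))"
    if "i < m" for i
  proof -
    have [simp]: "i < m" "n + i < n + m" using that by simp_all
    show ?thesis by measurable
  qed
  then show "i < m \<Longrightarrow> {\<omega> \<in> space (iid_sample P (n + m)). pit (\<omega> (n + i)) \<le> 0} \<in> sets (iid_sample P (n + m))" .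
  have "{\<omega> \<in> space (iid_sample P (n + m)). \<exists>i<m. pit (\<omega> (n + i)) \<le> 0}
      = (\<Union>i<m. {\<omega> \<in> space (iid_sample P (n + m)). pit (\<omega> (n + i)) \<le> 0})"
    by auto
  also have "\<dots> \<in> sets (iid_sample P (n + m))"
    using component by (intro sets.finite_UN) auto
  finally show "{\<omega> \<in> space (iid_sample P (n + m)). \<exists>i<m. pit (\<omega> (n + i)) \<le> 0} \<in> sets (iid_sample P (n + m))" .
qed

lemma prob_test_pit_nonpos:
  "measure (iid_sample P (n + m)) {\<omega> \<in> space (iid_sample P (n + m)). \<exists>i<m. pit (\<omega> (n + i)) \<le> 0} = 0"
proof -
  interpret S: prob_space "iid_sample P (n + m)" by (rule prob_space_iid_sample)
  have "{\<omega> \<in> space (iid_sample P (n + m)). \<exists>i<m. pit (\<omega> (n + i)) \<le> 0}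
      = (\<Union>i<m. {\<omega> \<in> space (iid_sample P (n + m)). pit (\<omega> (n + i)) \<le> 0})"
    by auto
  also have "measure (iid_sample P (n + m)) \<dots>
      \<le> (\<Sum>i<m. measure (iid_sample P (n + m)) {\<omega> \<in> space (iid_sample P (n + m)). pit (\<omega> (n + i)) \<le> 0})"
    using sets_test_pit_nonpos(1) by (intro S.finite_measure_subadditive_finite) auto
  also have "\<dots> = 0"
  proof (intro sum.neutral ballI)
    fix i assume "i \<in> {..<m}"
    have "{\<omega> \<in> space (iid_sample P (n + m)). pit (\<omega> (n + i)) \<le> 0}
        = {\<omega> \<in> space (iid_sample P (n + m)). \<omega> (n + i) \<in> {x \<in> space P. pit x \<le> 0}}"
      using \<open>i \<in> {..<m}\<close> space_iid_sample_component[of _ P "n + m" "n + i"] by auto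
    then show "S.prob {\<omega> \<in> space (iid_sample P (n + m)). pit (\<omega> (n + i)) \<le> 0} = 0"
      using measure_iid_sample_component[of "n + i" "n + m" "{x \<in> space P. pit x \<le> 0}"]
        prob_pit_le[of 0] \<open>i \<in> {..<m}\<close>
      by simp
  qed
  finally show ?thesis by (simp add: measure_le_0_iff)
qed

lemma prob_fisher_term_error_sum_ge_le:
  assumes e: "0 < e" "e < 1" and n: "0 < n" and c: "0 \<le> c" and r: "0 < r"
  shows "measure (iid_sample P (n + m)) {\<omega> \<in> space (iid_sample P (n + m)).
      r \<le> (\<Sum>i<m. max 0 (fisher_term_error n c e (pit (\<omega> (n + i)))))} \<le> m * fisher_term_error_mean n c e / r"
proof -
  define g where "g x = max 0 (fisher_term_error n c e (pit x))" for x
  have "(\<integral>\<^sup>+x. ennreal (g x) \<partial>P) = (\<integral>\<^sup>+x. ennreal (fisher_term_error n c e (pit x)) \<partial>P)"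
    by (intro nn_integral_cong) (simp add: g_def max_def ennreal_neg)
  also have "\<dots> \<le> ennreal (fisher_term_error_mean n c e)"
    by (rule nn_integral_fisher_term_error_le[OF e n c])
  finally have mean: "(\<integral>\<^sup>+x. ennreal (g x) \<partial>P) \<le> ennreal (fisher_term_error_mean n c e)" .
  have "measure (iid_sample P (n + m)) {\<omega> \<in> space (iid_sample P (n + m)). r \<le> (\<Sum>j\<in>(\<lambda>i. n + i) ` {..<m}. g (\<omega> j))}
      \<le> card ((\<lambda>i. n + i) ` {..<m}) * fisher_term_error_mean n c e / r"
    by (rule iid_sample_sum_Markov[OF test_block(1) _ _ mean _ r])
      (simp_all add: g_def fisher_term_means_nonneg[OF e c])
  then show ?thesis
    using test_block(2) by (simp add: sum_test_block g_def)
qed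

lemma prob_fisher_stat_ge_le:
  assumes n: "0 < n" and c: "0 \<le> c" and e: "0 < dkwm_margin n \<delta>" "dkwm_margin n \<delta> < 1"
    and ce: "(3 * c\<^sup>2 + 2 * c + 4) / n \<le> dkwm_margin n \<delta>"
    and l: "0 \<le> l" and lB: "l * (- 2 * ln (dkwm_margin n \<delta>) + 2) \<le> 1"
  shows "measure (iid_sample P (n + m)) {\<omega> \<in> space (iid_sample P (n + m)). t \<le> fisher_stat n m \<delta> s \<omega>}
    \<le> 2 * (real n + 1) * exp (- (c\<^sup>2 / 4))
      + exp (- l * t) * (1 + l * fisher_term_bound_mean n c (dkwm_margin n \<delta>) + 24 * l\<^sup>2) ^ m"
proof -
  interpret S: prob_space "iid_sample P (n + m)" by (rule prob_space_iid_sample)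
  define e where "e = dkwm_margin n \<delta>"
  define Y where "Y x = fisher_term_bound n c e (pit x)" for x
  define B where "B = {\<omega> \<in> space (iid_sample P (n + m)). t \<le> (\<Sum>j\<in>(\<lambda>i. n + i) ` {..<m}. Y (\<omega> j))}"
  have [measurable]: "Y \<in> borel_measurable P"
    unfolding Y_def[abs_def] by measurable
  have [measurable]: "(\<lambda>\<omega>. \<Sum>j\<in>(\<lambda>i. n + i) ` {..<m}. Y (\<omega> j)) \<in> borel_measurable (iid_sample P (n + m))"
    by (rule borel_measurable_iid_sample_sum[OF test_block(1)]) measurable
  have [measurable]: "rank_deviation_event n (n + m) c \<in> sets (iid_sample P (n + m))"
    by (rule sets_rank_deviation_event) simp
  have "{\<omega> \<in> space (iid_sample P (n + m)). t \<le> fisher_stat n m \<delta> s \<omega>} \<subseteq> rank_deviation_event n (n + m) c \<union> B"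
    using fisher_stat_bounds(1)[OF n c e ce] by (force simp: B_def Y_def e_def sum_test_block)
  then have "measure (iid_sample P (n + m)) {\<omega> \<in> space (iid_sample P (n + m)). t \<le> fisher_stat n m \<delta> s \<omega>}
      \<le> measure (iid_sample P (n + m)) (rank_deviation_event n (n + m) c \<union> B)"
    by (rule S.finite_measure_mono) (simp add: B_def)
  also have "\<dots> \<le> measure (iid_sample P (n + m)) (rank_deviation_event n (n + m) c) + measure (iid_sample P (n + m)) B"
    by (rule measure_Un_le) (simp_all add: B_def)
  also have "\<dots> \<le> 2 * (real n + 1) * exp (- (c\<^sup>2 / 4))
      + exp (- l * t) * (1 + l * fisher_term_bound_mean n c e + 24 * l\<^sup>2) ^ m"
  proof (intro add_mono prob_rank_deviation_event_le)
    have "0 \<le> 1 + l * fisher_term_bound_mean n c e + 24 * l\<^sup>2"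
      using l fisher_term_means_nonneg(1)[of e c n] e c by (simp add: e_def)
    then show "measure (iid_sample P (n + m)) B \<le> exp (- l * t) * (1 + l * fisher_term_bound_mean n c e + 24 * l\<^sup>2) ^ m"
      using iid_sample_sum_Chernoff[OF test_block(1) _ l, of Y] test_block(2)
        nn_integral_exp_fisher_term_bound_le[OF n c e[folded e_def] ce[folded e_def] l lB[folded e_def]]
      by (simp add: B_def Y_def)
  qed (use n c in simp_all)
  finally show ?thesis by (simp add: e_def)
qed

lemma abs_reject_prob_sub_le:
  assumes n: "0 < n" and m: "0 < m" and c: "0 \<le> c" and e: "0 < dkwm_margin n \<delta>" "dkwm_margin n \<delta> < 1"
    and ce: "(3 * c\<^sup>2 + 2 * c + 4) / n \<le> dkwm_margin n \<delta>" and \<alpha>: "0 < \<alpha>" "\<alpha> < 1" and r: "0 < r"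
  shows "\<bar>reject_prob P s n m \<delta> \<alpha> - \<alpha>\<bar> \<le> r / (2 * sqrt (real m)) + 2 * (real n + 1) * exp (- (c\<^sup>2 / 4))
    + m * fisher_term_error_mean n c (dkwm_margin n \<delta>) / r"
proof -
  interpret S: prob_space "iid_sample P (n + m)" by (rule prob_space_iid_sample)
  define e q where "e = dkwm_margin n \<delta>" and "q = chi2_quantile (2 * m) (1 - \<alpha>)"
  define R where "R \<omega> = (\<Sum>i<m. max 0 (fisher_term_error n c e (pit (\<omega> (n + i)))))" for \<omega>
  define Z where "Z = {\<omega> \<in> space (iid_sample P (n + m)). \<exists>i<m. pit (\<omega> (n + i)) \<le> 0}"
  define B where "B = rank_deviation_event n (n + m) c \<union> Z \<union> {\<omega> \<in> space (iid_sample P (n + m)). r \<le> R \<omega>}"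
  have [measurable]: "R \<in> borel_measurable (iid_sample P (n + m))"
    unfolding R_def[abs_def] by (rule borel_measurable_test_sum) measurable
  have sets: "rank_deviation_event n (n + m) c \<in> sets (iid_sample P (n + m))"
    "Z \<in> sets (iid_sample P (n + m))" "{\<omega> \<in> space (iid_sample P (n + m)). r \<le> R \<omega>} \<in> sets (iid_sample P (n + m))"
    using sets_rank_deviation_event[of n "n + m" c] sets_test_pit_nonpos(2) by (simp_all add: Z_def)
  then have B: "B \<in> sets (iid_sample P (n + m))"
    unfolding B_def by (intro sets.Un)
  have "S.prob B \<le> S.prob (rank_deviation_event n (n + m) c) + S.prob Z
      + S.prob {\<omega> \<in> space (iid_sample P (n + m)). r \<le> R \<omega>}"
    using measure_Un_le[OF sets.Un[OF sets(1,2)] sets(3)] measure_Un_le[OF sets(1,2)]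
    by (simp add: B_def)
  also have "\<dots> \<le> 2 * (real n + 1) * exp (- (c\<^sup>2 / 4)) + 0 + m * fisher_term_error_mean n c e / r"
    using prob_rank_deviation_event_le[OF n _ c, of "n + m"] prob_test_pit_nonpos[of n m]
      prob_fisher_term_error_sum_ge_le[of e n c r m] e n c r
    by (intro add_mono) (simp_all add: Z_def R_def e_def)
  finally have "S.prob B \<le> 2 * (real n + 1) * exp (- (c\<^sup>2 / 4)) + m * fisher_term_error_mean n c e / r"
    by simp
  moreover have close: "\<bar>fisher_stat n m \<delta> s \<omega> - oracle_fisher_stat n m \<omega>\<bar> < r"
    if "\<omega> \<in> space (iid_sample P (n + m))" "\<omega> \<notin> B" for \<omega>
  proof -
    have "\<bar>fisher_stat n m \<delta> s \<omega> - oracle_fisher_stat n m \<omega>\<bar> \<le> (\<Sum>i<m. fisher_term_error n c e (pit (\<omega> (n + i))))"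
      using that fisher_stat_bounds(2)[OF n c e ce, of \<omega>]
      by (auto simp: B_def Z_def oracle_fisher_stat_def e_def not_le)
    also have "\<dots> \<le> R \<omega>"
      by (auto simp: R_def intro: sum_mono)
    finally show ?thesis
      using that by (auto simp: B_def)
  qed
  note perturbation = S.prob_threshold_perturbation[where T = "\<lambda>\<omega>. fisher_stat n m \<delta> s \<omega>"
      and T' = "oracle_fisher_stat n m" and B = B and r = r and q = q,
      OF borel_measurable_fisher_stat borel_measurable_oracle_fisher_stat B close]
  have "reject_prob P s n m \<delta> \<alpha> \<le> S.prob B + measure (chi2_measure (2 * m)) {q - r<..}"
    using perturbation(1) prob_oracle_fisher_stat[OF m, of "{q - r<..}"] by (simp add: reject_prob_eq q_def)
  moreover have "measure (chi2_measure (2 * m)) {q + r..} \<le> S.prob B + reject_prob P s n m \<delta> \<alpha>"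
    using perturbation(2) prob_oracle_fisher_stat[OF m, of "{q + r..}"] by (simp add: reject_prob_eq q_def)
  ultimately show ?thesis
    using chi2_measure_near_quantile[OF m \<alpha> r] by (simp add: q_def e_def abs_le_iff)
qed

lemma reject_prob_log_sq_decay:
  assumes \<delta>: "0 < \<delta>" "\<delta> < 1" and \<gamma>: "0 < \<gamma>" and \<alpha>: "0 < \<alpha>" "\<alpha> < 1"
  shows "\<forall>\<^sub>F n in sequentially. \<forall>m::nat. real m = \<gamma> * real n \<longrightarrow>
    reject_prob P s n m \<delta> \<alpha> \<le> exp (- log_sq_rate \<delta> \<gamma> * (ln (real n))\<^sup>2)"
proof -
  define e0 C where "e0 = sqrt (ln (2 / \<delta>) / 2)" and "C = log_sq_rate \<delta> \<gamma>"
  have C_eq: "C = min ((e0 / 48)\<^sup>2 / 8) (\<gamma> * (e0 / 96) * e0 / 16)"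
    by (simp add: C_def e0_def log_sq_rate_def Let_def)
  define c0 a D K where "c0 = e0 / 48" and "a = e0 / 96" and "D = \<gamma> * a * e0 / 8"
    and "K = 3 / sqrt (1 - \<alpha>)"
  have "1 < 2 / \<delta>" using \<delta> by (simp add: field_simps)
  then have e0: "0 < e0" by (simp add: e0_def ln_gt_zero)
  then have pos: "0 < c0" "0 < a" "0 < D" "0 < K" "0 < sqrt \<gamma>"
    using \<gamma> \<alpha> by (simp_all add: c0_def a_def D_def K_def)
  have "C \<le> D / 2"
    by (simp add: C_eq D_def a_def)
  then have C: "C \<le> c0\<^sup>2 / 8" "0 < D - C"
    using pos(3) by (simp_all add: C_eq c0_def)
  have "\<forall>\<^sub>F n::nat in sequentially. 2 \<le> n \<and> e0 / sqrt n < 1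
      \<and> (3 * (c0 * ln n)\<^sup>2 + 2 * (c0 * ln n) + 4) / n \<le> e0 / sqrt n
      \<and> (a * ln n / sqrt n) * (- 2 * ln (e0 / sqrt n) + 2) \<le> 1
      \<and> 2 * (real n + 1) * exp (- (c0\<^sup>2 / 8 * (ln n)\<^sup>2)) \<le> 1 / 2
      \<and> - 2 * (e0 / sqrt n) + 2 * (e0 / sqrt n) * ln (e0 / sqrt n) + 12 * (c0 * ln n) / sqrt n
          + 4 * ((c0 * ln n)\<^sup>2 + c0 * ln n + 2) / n * (ln (1 + e0 / sqrt n) - ln (e0 / sqrt n))
        \<le> - (e0 / 2 * ln n / sqrt n)
      \<and> a * (K * sqrt \<gamma>) * ln n \<le> D * (ln n)\<^sup>2
      \<and> ln 2 \<le> (D - C) * (ln n)\<^sup>2"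
    using e0 pos C unfolding c0_def a_def by (intro eventually_conj; real_asymp)
  then show ?thesis
  proof eventually_elim
    case (elim n)
    show ?case
    proof (intro allI impI)
      fix m :: nat
      assume m: "real m = \<gamma> * real n"
      txt \<open>c of order log n makes the bad rank event negligible; the Chernoff parameter l of order
        log n / sqrt n balances the downward mean shift against the quadratic term of the mgf.\<close>
      define L e c l where "L = ln (real n)" and "e = dkwm_margin n \<delta>" and "c = c0 * L"
        and "l = a * L / sqrt n"
      define Z where "Z = fisher_term_bound_mean n c e"
      have n: "0 < n" and L: "0 < L" using elim by (auto simp: L_def)
      have e: "e = e0 / sqrt n" using dkwm_margin_eq[OF n] by (simp add: e_def e0_def)
      have "0 < real m" using m \<gamma> n by simp
      then have m0: "0 < m" by simp
      have cl: "0 \<le> c" "0 \<le> l" using pos L by (simp_all add: c_def l_def)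
      have "0 < e" "e < 1" using elim e e0 n by auto
      then have "0 \<le> Z" unfolding Z_def using cl(1) by (rule fisher_term_means_nonneg(1))
      then have Z: "0 \<le> 1 + l * Z + 24 * l\<^sup>2"
        using cl by (intro add_nonneg_nonneg mult_nonneg_nonneg) auto
      have "reject_prob P s n m \<delta> \<alpha>
          \<le> 2 * (real n + 1) * exp (- ((c0 * L)\<^sup>2 / 4))
            + exp (- l * chi2_quantile (2 * m) (1 - \<alpha>)) * (1 + l * Z + 24 * l\<^sup>2) ^ m"
        unfolding reject_prob_eq Z_def e_def c_def[symmetric] using elim e n cl e0
        by (intro prob_fisher_stat_ge_le) (simp_all add: c_def l_def L_def e_def)
      also have "2 * (real n + 1) * exp (- ((c0 * L)\<^sup>2 / 4)) \<le> exp (- C * L\<^sup>2) / 2"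
        using elim C(1) by (intro Gaussian_tail_split) (simp_all add: L_def)
      also have "exp (- l * chi2_quantile (2 * m) (1 - \<alpha>)) * (1 + l * Z + 24 * l\<^sup>2) ^ m
          \<le> exp (l * K * sqrt m + real m * l * (Z - 2) + 24 * real m * l\<^sup>2)"
        using chi2_quantile_lower_bound[OF m0 \<alpha>] cl Z by (intro exp_mult_power_le) (simp_all add: K_def)
      also have "l * K * sqrt m + real m * l * (Z - 2) + 24 * real m * l\<^sup>2 \<le> - D * L\<^sup>2"
      proof -
        have "Z - 2 \<le> - (e0 / 2 * L / sqrt n)"
          using elim by (simp add: Z_def fisher_term_bound_mean_def rank_error_mean_def c_def e L_def)
        moreover have "a * (K * sqrt \<gamma>) * L \<le> \<gamma> * a * e0 / 8 * L\<^sup>2"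
          using elim by (simp add: L_def D_def)
        ultimately show ?thesis
          using Chernoff_exponent_log_sq[OF n \<gamma> m a_def l_def cl(2)] by (simp add: D_def)
      qed
      also have "exp (- D * L\<^sup>2) = exp (- C * L\<^sup>2) * exp (- ((D - C) * L\<^sup>2))"
        by (simp add: mult_exp_exp algebra_simps)
      also have "\<dots> \<le> exp (- C * L\<^sup>2) / 2"
        using elim exp_le_cancel_iff[of "- ((D - C) * L\<^sup>2)" "- ln 2"] by (simp add: L_def exp_minus)
      finally show "reject_prob P s n m \<delta> \<alpha> \<le> exp (- log_sq_rate \<delta> \<gamma> * (ln (real n))\<^sup>2)"
        by (simp add: L_def C_def)
    qed
  qed
qed

lemma reject_prob_tendsto_alpha:
  assumes \<delta>: "0 < \<delta>" "\<delta> < 1" and \<alpha>: "0 < \<alpha>" "\<alpha> < 1"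
    and m_top: "filterlim m at_top sequentially"
    and m_small: "(\<lambda>n. real (m n)) \<in> o(\<lambda>n. real n / (ln (real n))\<^sup>2)"
  shows "(\<lambda>n. reject_prob P s n (m n) \<delta> \<alpha>) \<longlonglongrightarrow> \<alpha>"
proof (rule tendstoI)
  fix \<epsilon> :: real
  assume \<epsilon>: "0 < \<epsilon>"
  define e0 c0 \<eta> where "e0 = sqrt (ln (2 / \<delta>) / 2)" and "c0 = e0 / 48" and "\<eta> = \<epsilon> / 2"
  have "1 < 2 / \<delta>" using \<delta> by (simp add: field_simps)
  then have e0: "0 < e0" and c0: "0 < c0" and \<eta>: "0 < \<eta>"
    using \<epsilon> by (simp_all add: e0_def c0_def \<eta>_def ln_gt_zero)
  have "(\<lambda>n. sqrt (real (m n) / (real n / (ln (real n))\<^sup>2))) \<longlonglongrightarrow> sqrt 0"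
    by (intro tendsto_real_sqrt smalloD_tendsto[OF m_small])
  then have "(\<lambda>n. 2 * e0 * sqrt (real (m n) * (ln (real n))\<^sup>2 / real n) / \<eta>) \<longlonglongrightarrow> 2 * e0 * 0 / \<eta>"
    using \<eta> by (intro tendsto_intros) auto
  then have ev_m: "\<forall>\<^sub>F n in sequentially. 2 * e0 * sqrt (real (m n) * (ln (real n))\<^sup>2 / real n) / \<eta> < \<epsilon> / 4"
    using \<epsilon> by (intro order_tendstoD) auto
  have ev_tail: "\<forall>\<^sub>F n::nat in sequentially. 2 * (real n + 1) * exp (- ((c0 * ln n)\<^sup>2 / 4)) < \<epsilon> / 4"
  proof -
    have "(\<lambda>n::nat. 2 * (real n + 1) * exp (- ((c0 * ln n)\<^sup>2 / 4))) \<longlonglongrightarrow> 0"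
      using c0 by real_asymp
    then show ?thesis using \<epsilon> by (intro order_tendstoD) auto
  qed
  have "\<forall>\<^sub>F n::nat in sequentially. 2 \<le> n \<and> e0 / sqrt n < 1
      \<and> (3 * (c0 * ln n)\<^sup>2 + 2 * (c0 * ln n) + 4) / n \<le> e0 / sqrt n
      \<and> 2 * (e0 / sqrt n) - 2 * (e0 / sqrt n) * ln (e0 / sqrt n) + 12 * (c0 * ln n) / sqrt n
          + 4 * ((c0 * ln n)\<^sup>2 + c0 * ln n + 2) / n * (ln (1 + e0 / sqrt n) - ln (e0 / sqrt n))
        \<le> 2 * e0 * ln n / sqrt n"
    using e0 unfolding c0_def by (intro eventually_conj; real_asymp)
  moreover have "\<forall>\<^sub>F n in sequentially. 1 \<le> m n"
    using m_top by (simp add: filterlim_at_top)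
  moreover note ev_tail ev_m
  ultimately show "\<forall>\<^sub>F n in sequentially. dist (reject_prob P s n (m n) \<delta> \<alpha>) \<alpha> < \<epsilon>"
  proof eventually_elim
    case (elim n)
    txt \<open>At the scale r of order sqrt m the density bound for the chi-square law costs only
      eta / 2, while Markov's inequality for the perturbation still wins since m = o(n / log^2 n).\<close>
    define L e c r where "L = ln (real n)" and "e = dkwm_margin n \<delta>" and "c = c0 * L"
      and "r = \<eta> * sqrt (m n)"
    have n: "0 < n" and L: "0 < L" and m: "0 < m n" using elim by (auto simp: L_def)
    have e: "e = e0 / sqrt n" using dkwm_margin_eq[OF n] by (simp add: e_def e0_def)
    have r: "0 < r" using \<eta> m by (simp add: r_def)
    have "\<bar>reject_prob P s n (m n) \<delta> \<alpha> - \<alpha>\<bar>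
        \<le> r / (2 * sqrt (m n)) + 2 * (real n + 1) * exp (- (c\<^sup>2 / 4)) + m n * fisher_term_error_mean n c e / r"
      unfolding e_def using elim e e0 L c0 n m \<alpha> r
      by (intro abs_reject_prob_sub_le) (simp_all add: c_def L_def e_def)
    also have "r / (2 * sqrt (m n)) = \<epsilon> / 4"
      using m by (simp add: r_def \<eta>_def)
    also have "2 * (real n + 1) * exp (- (c\<^sup>2 / 4)) < \<epsilon> / 4"
      using elim by (simp add: c_def L_def)
    also have "m n * fisher_term_error_mean n c e / r \<le> 2 * e0 * sqrt (m n * L\<^sup>2 / n) / \<eta>"
    proof -
      have "fisher_term_error_mean n c e \<le> 2 * e0 * L / sqrt n"
        using elim by (simp add: fisher_term_error_mean_def rank_error_mean_def c_def e L_def)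
      then have "m n * fisher_term_error_mean n c e / r \<le> m n * (2 * e0 * L / sqrt n) / r"
        using r by (intro divide_right_mono mult_left_mono) auto
      also have "\<dots> = 2 * e0 * sqrt (m n * L\<^sup>2 / n) / \<eta>"
        using m n L \<eta> by (simp add: r_def real_sqrt_mult real_sqrt_divide field_simps)
      finally show ?thesis .
    qed
    also have "\<dots> < \<epsilon> / 4"
      using elim by (simp add: L_def)
    finally show ?case
      using \<epsilon> by (simp add: dist_real_def)
  qed
qed

end


theorem theorem12:
  fixes \<delta> :: real
  assumes "0 < \<delta>" "\<delta> < 1"
  shows
   "(\<forall>\<gamma>::real. 0 < \<gamma> \<longrightarrow>
       (\<exists>C>0. \<forall>\<alpha>::real. 0 < \<alpha> \<longrightarrow> \<alpha> < 1 \<longrightarrow>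
          (\<forall>(P::'a::euclidean_space measure) s. valid_setting P s \<longrightarrow>
             (\<forall>\<^sub>F n in sequentially. \<forall>m::nat. real m = \<gamma> * real n \<longrightarrow>
                reject_prob P s n m \<delta> \<alpha> \<le> exp (- C * (ln (real n))^2)))))
    \<and>
    (\<forall>\<alpha>::real. 0 < \<alpha> \<longrightarrow> \<alpha> < 1 \<longrightarrow>
       (\<forall>(P::'a measure) s (m::nat \<Rightarrow> nat). valid_setting P s \<longrightarrow>
          filterlim m at_top sequentially \<longrightarrow>
          (\<lambda>n. real (m n)) \<in> o(\<lambda>n. real n / (ln (real n))^2) \<longrightarrow>
          ((\<lambda>n. reject_prob P s n (m n) \<delta> \<alpha>) \<longlonglongrightarrow> \<alpha>)))"
proof (intro conjI allI impI)
  fix \<gamma> :: real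
  assume \<gamma>: "0 < \<gamma>"
  show "\<exists>C>0. \<forall>\<alpha>::real. 0 < \<alpha> \<longrightarrow> \<alpha> < 1 \<longrightarrow>
      (\<forall>(P::'a measure) s. valid_setting P s \<longrightarrow>
        (\<forall>\<^sub>F n in sequentially. \<forall>m::nat. real m = \<gamma> * real n \<longrightarrow>
          reject_prob P s n m \<delta> \<alpha> \<le> exp (- C * (ln (real n))\<^sup>2)))"
    using log_sq_rate_pos[OF assms \<gamma>]
      score_null_model.reject_prob_log_sq_decay[OF score_null_model.intro assms \<gamma>]
    by blast
next
  fix \<alpha> :: real and P :: "'a measure" and s and m :: "nat \<Rightarrow> nat"
  assume "0 < \<alpha>" "\<alpha> < 1" "valid_setting P s" "filterlim m at_top sequentially"
    "(\<lambda>n. real (m n)) \<in> o(\<lambda>n. real n / (ln (real n))\<^sup>2)"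
  then show "(\<lambda>n. reject_prob P s n (m n) \<delta> \<alpha>) \<longlonglongrightarrow> \<alpha>"
    using score_null_model.reject_prob_tendsto_alpha[OF score_null_model.intro assms] by blast
qed

end
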